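(* Let $N$ be a lattice, let $\sigma\subset N_{\mathbb R}=N\otimes_{\mathbb Z}\mathbb R$ be a strongly convex rational polyhedral cone, let $\Delta$ be a rational simplicial subdivision of $\sigma$, and let $v_1,\ldots,v_s$ be the primitive generators of the rays of $\Delta$. Then, in the quotient field of $\mathbb Z[N]$, \[ (1-x^{v_1})\cdots(1-x^{v_s})\cdot G_\sigma \;=\; H_\Delta+\sum_{\tau\in\Delta^{\mathrm{sing}}}\Bigl(B_\tau\cdot H_{\operatorname{lk}\tau}\cdot\prod_{v_i\notin\operatorname{Star}\tau}(1-x^{v_i})\Bigr). \]
   Context: $\mathbb Z[N]$ is the Laurent polynomial (group) ring of $N$, with monomials $x^v$ for $v\in N$. $G_\sigma=\sum_{v\in\sigma\cap N}x^v$ is the generating function of lattice points of $\sigma$ (a rational function). For a cone $\tau$ we write $v_i\in\tau$ to mean that $v_i$ generates a ray of $\tau$. Define $H_\Delta=\sum_{\tau\in\Delta}\bigl(\prod_{v_i\in\tau}x^{v_i}\cdot\prod_{v_j\notin\tau}(1-x^{v_j})\bigr)$, the sum over all cones of $\Delta$ (including the zero cone). A cone is unimodular if it is spanned by part of a basis of $N$; $\Delta^{\mathrm{sing}}$ is the set of cones of $\Delta$ that are not unimodular. For $\tau\in\Delta$ spanned by $v_1,\ldots,v_r$ (after renumbering), $\operatorname{Box}(\tau)=\{a_1v_1+\cdots+a_rv_r : 0<a_i<1\}$ and $B_\tau=\sum_{v\in\operatorname{Box}(\tau)\cap N}x^v$. The link $\operatorname{lk}\tau$ is the set of cones $\gamma\in\Delta$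 with $\gamma\cap\tau=0$ and $\gamma+\tau\in\Delta$; $v_j\in\operatorname{lk}\tau$ means $v_j$ generates a ray of some cone of $\operatorname{lk}\tau$, and $H_{\operatorname{lk}\tau}=\sum_{\gamma\in\operatorname{lk}\tau}\bigl(\prod_{v_i\in\gamma}x^{v_i}\cdot\prod_{v_j\in\operatorname{lk}\tau,\,v_j\notin\gamma}(1-x^{v_j})\bigr)$. $\operatorname{Star}\tau$ is the union of the maximal cones of $\Delta$ containing $\tau$, and $v_i\notin\operatorname{Star}\tau$ means $v_i$ does not generate a ray of any such cone. *)

theory Defs
  imports "HOL-Analysis.Analysis" "HOL-Library.Poly_Mapping"
begin

text \<open>The lattice N is modelled as int^'n (any lattice is isomorphic to some Z^n);
  N_R = real^'n, with the embedding emb.  Laurent polynomials Z[N] are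
  finitely supported maps (int^'n) \<Rightarrow>0 int with convolution product;
  formal series (like G_sigma) are arbitrary maps int^'n \<Rightarrow> int.\<close>

type_synonym 'n lpoly = "(int ^ 'n) \<Rightarrow>\<^sub>0 int"

definition emb :: "int ^ 'n \<Rightarrow> real ^ 'n" where
  "emb u = (\<chi> i. real_of_int (u $ i))"

definition xmon :: "int ^ 'n \<Rightarrow> 'n lpoly" where
  "xmon v = Poly_Mapping.single v 1"

definition cone_gen :: "(real ^ 'n) set \<Rightarrow> (real ^ 'n) set" where
  "cone_gen S = {x. \<exists>c. (\<forall>v\<in>S. 0 \<le> c v) \<and> x = (\<Sum>v\<in>S. c v *\<^sub>R v)}"

definition rational_polyhedral_cone :: "(real ^ 'n) set \<Rightarrow> bool" where
  "rational_polyhedral_cone \<sigma> \<longleftrightarrow>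
     (\<exists>S. finite S \<and> S \<subseteq> range emb \<and> \<sigma> = cone_gen S)"

definition strongly_convex :: "(real ^ 'n) set \<Rightarrow> bool" where
  "strongly_convex \<sigma> \<longleftrightarrow> \<sigma> \<inter> uminus ` \<sigma> = {0}"

definition rational_simplicial_cone :: "(real ^ 'n) set \<Rightarrow> bool" where
  "rational_simplicial_cone \<tau> \<longleftrightarrow>
     (\<exists>S. finite S \<and> S \<subseteq> range emb \<and> independent S \<and> \<tau> = cone_gen S)"

definition is_fan :: "(real ^ 'n) set set \<Rightarrow> bool" where
  "is_fan \<Delta> \<longleftrightarrow> finite \<Delta> \<and> {} \<notin> \<Delta> \<and>
     (\<forall>\<tau>\<in>\<Delta>. \<forall>F. F face_of \<tau> \<and> F \<noteq> {} \<longrightarrow> F \<in> \<Delta>) \<and>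
     (\<forall>\<tau>\<in>\<Delta>. \<forall>\<tau>'\<in>\<Delta>. (\<tau> \<inter> \<tau>') face_of \<tau> \<and> (\<tau> \<inter> \<tau>') face_of \<tau>')"

definition rational_simplicial_subdivision ::
    "(real ^ 'n) set set \<Rightarrow> (real ^ 'n) set \<Rightarrow> bool" where
  "rational_simplicial_subdivision \<Delta> \<sigma> \<longleftrightarrow>
     is_fan \<Delta> \<and> (\<forall>\<tau>\<in>\<Delta>. rational_simplicial_cone \<tau>) \<and> \<Union>\<Delta> = \<sigma>"

definition primitive :: "int ^ 'n \<Rightarrow> bool" where
  "primitive v \<longleftrightarrow> v \<noteq> 0 \<and> (\<forall>w (k::int). v = k *s w \<longrightarrow> k = 1 \<or> k = -1)"

definition ray_gens :: "(real ^ 'n) set set \<Rightarrow> (int ^ 'n) set" where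
  "ray_gens \<Delta> = {v. primitive v \<and> cone_gen {emb v} \<in> \<Delta>}"

definition gens :: "(real ^ 'n) set set \<Rightarrow> (real ^ 'n) set \<Rightarrow> (int ^ 'n) set" where
  "gens \<Delta> \<tau> = {v \<in> ray_gens \<Delta>. cone_gen {emb v} face_of \<tau>}"

definition H :: "(real ^ 'n) set set \<Rightarrow> 'n lpoly" where
  "H \<Delta> = (\<Sum>\<tau>\<in>\<Delta>. (\<Prod>v\<in>gens \<Delta> \<tau>. xmon v) *
                    (\<Prod>v\<in>ray_gens \<Delta> - gens \<Delta> \<tau>. 1 - xmon v))"

definition zbasis :: "(int ^ 'n) set \<Rightarrow> bool" where
  "zbasis B \<longleftrightarrow> finite B \<and>
     (\<forall>w. \<exists>c. w = (\<Sum>b\<in>B. c b *s b)) \<and>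
     (\<forall>c. (\<Sum>b\<in>B. c b *s b) = 0 \<longrightarrow> (\<forall>b\<in>B. c b = 0))"

definition unimodular :: "(real ^ 'n) set \<Rightarrow> bool" where
  "unimodular \<tau> \<longleftrightarrow> (\<exists>S B. S \<subseteq> B \<and> zbasis B \<and> \<tau> = cone_gen (emb ` S))"

definition sing :: "(real ^ 'n) set set \<Rightarrow> (real ^ 'n) set set" where
  "sing \<Delta> = {\<tau>\<in>\<Delta>. \<not> unimodular \<tau>}"

definition box_pts :: "(real ^ 'n) set set \<Rightarrow> (real ^ 'n) set \<Rightarrow> (int ^ 'n) set" where
  "box_pts \<Delta> \<tau> = {u. \<exists>a. (\<forall>v\<in>gens \<Delta> \<tau>. 0 < a v \<and> a v < 1) \<and>
                          emb u = (\<Sum>v\<in>gens \<Delta> \<tau>. a v *\<^sub>R emb v)}"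

definition B :: "(real ^ 'n) set set \<Rightarrow> (real ^ 'n) set \<Rightarrow> 'n lpoly" where
  "B \<Delta> \<tau> = (\<Sum>u\<in>box_pts \<Delta> \<tau>. xmon u)"

definition lk :: "(real ^ 'n) set set \<Rightarrow> (real ^ 'n) set \<Rightarrow> (real ^ 'n) set set" where
  "lk \<Delta> \<tau> = {\<gamma>\<in>\<Delta>. \<gamma> \<inter> \<tau> = {0} \<and> {a + b | a b. a \<in> \<gamma> \<and> b \<in> \<tau>} \<in> \<Delta>}"

definition lk_gens :: "(real ^ 'n) set set \<Rightarrow> (real ^ 'n) set \<Rightarrow> (int ^ 'n) set" where
  "lk_gens \<Delta> \<tau> = {v. \<exists>\<gamma>\<in>lk \<Delta> \<tau>. v \<in> gens \<Delta> \<gamma>}"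

definition H_lk :: "(real ^ 'n) set set \<Rightarrow> (real ^ 'n) set \<Rightarrow> 'n lpoly" where
  "H_lk \<Delta> \<tau> = (\<Sum>\<gamma>\<in>lk \<Delta> \<tau>. (\<Prod>v\<in>gens \<Delta> \<gamma>. xmon v) *
                    (\<Prod>v\<in>lk_gens \<Delta> \<tau> - gens \<Delta> \<gamma>. 1 - xmon v))"

definition maximal_cone :: "(real ^ 'n) set set \<Rightarrow> (real ^ 'n) set \<Rightarrow> bool" where
  "maximal_cone \<Delta> \<delta> \<longleftrightarrow> \<delta> \<in> \<Delta> \<and> \<not> (\<exists>\<delta>'\<in>\<Delta>. \<delta> \<subset> \<delta>')"

text \<open>the v_i generating a ray of some maximal cone containing \<tau> (i.e. v_i \<in> Star \<tau>)\<close>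
definition star_gens :: "(real ^ 'n) set set \<Rightarrow> (real ^ 'n) set \<Rightarrow> (int ^ 'n) set" where
  "star_gens \<Delta> \<tau> = {v. \<exists>\<delta>. maximal_cone \<Delta> \<delta> \<and> \<tau> \<subseteq> \<delta> \<and> v \<in> gens \<Delta> \<delta>}"

definition G :: "(real ^ 'n) set \<Rightarrow> int ^ 'n \<Rightarrow> int" where
  "G \<sigma> u = (if emb u \<in> \<sigma> then 1 else 0)"

definition mul_series :: "'n lpoly \<Rightarrow> (int ^ 'n \<Rightarrow> int) \<Rightarrow> (int ^ 'n \<Rightarrow> int)" where
  "mul_series p g = (\<lambda>w. \<Sum>u\<in>Poly_Mapping.keys p. Poly_Mapping.lookup p u * g (w - u))"

end

(* Every lattice point w of \<sigma> lies in the relative interior of exactly one cone \<rho> of \<Delta>: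
   w = \<Sum> c_v v over the rays v of \<rho>, with all c_v > 0.  Let \<tau> be the face of \<rho> spanned by
   the rays with non-integral c_v; splitting off integer parts gives the unique decomposition
     w = u + \<Sum>_{v \<in> \<rho> - \<tau>} v + \<Sum>_{v \<in> \<rho>} n_v v,   u \<in> Box(\<tau>),  n_v \<in> \<nat>.
   Hence G_\<sigma> = \<Sum>_{\<tau> \<subseteq> \<rho>} B_\<tau> x^(\<rho> - \<tau>) / \<Prod>_{v \<in> \<rho>} (1 - x^v).  After multiplying by
   \<Prod>_i (1 - x^v_i), the sum over the cones \<rho> \<supseteq> \<tau> becomes, writing \<rho> = \<gamma> + \<tau> with \<gamma> in
   the link of \<tau>, the product H_lk(\<tau>) \<Prod>_{v \<notin> Star \<tau>} (1 - x^v).  The zero cone contributes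
   H_\<Delta>, and nonzero unimodular cones have no box points. *)

theory Submission
  imports Defs
begin

lemma sum_scaleR_if_subset:
  fixes f :: "'a \<Rightarrow> 'b::real_vector"
  assumes "finite P" "T \<subseteq> P"
  shows "(\<Sum>v\<in>P. (if v \<in> T then c v else 0) *\<^sub>R f v) = (\<Sum>v\<in>T. c v *\<^sub>R f v)"
  using assms by (simp add: if_distrib[of "\<lambda>a. a *\<^sub>R _"] sum.inter_restrict[symmetric] Int_absorb1 cong: if_cong)

lemma sum_scaleR_if_eq:
  fixes f :: "'a \<Rightarrow> 'b::real_vector"
  assumes "finite P" "v \<in> P"
  shows "(\<Sum>w\<in>P. (if w = v then a else 0) *\<^sub>R f w) = a *\<^sub>R f v"
  using sum_scaleR_if_subset[of P "{v}" "\<lambda>_. a" f] assms by (simp cong: if_cong)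

lemma sum_of_bool_unique:
  assumes "finite S" "\<And>x y. x \<in> S \<Longrightarrow> y \<in> S \<Longrightarrow> P x \<Longrightarrow> P y \<Longrightarrow> x = y"
  shows "(\<Sum>x\<in>S. of_bool (P x)) = (of_bool (\<exists>x\<in>S. P x) :: 'a::semiring_1)"
proof (cases "\<exists>x\<in>S. P x")
  case True
  then obtain x0 where x0: "x0 \<in> S" "P x0"
    by blast
  with assms(2) have "(\<Sum>x\<in>S. of_bool (P x)) = (\<Sum>x\<in>S. if x = x0 then 1 else (0::'a))"
    by (intro sum.cong) auto
  with assms(1) x0 True show ?thesis
    by simp
qed simp

lemma sum_Sigma_eq_sum_sum:
  "finite I \<Longrightarrow> \<forall>i\<in>I. finite (J i) \<Longrightarrow> (\<Sum>x\<in>Sigma I J. f x) = (\<Sum>i\<in>I. \<Sum>j\<in>J i. f (i, j))"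
  by (simp add: sum.Sigma)

section \<open>Laurent polynomials acting on formal series\<close>

lemma lookup_times_sum_keys:
  "Poly_Mapping.lookup (p * q) w =
     (\<Sum>a\<in>Poly_Mapping.keys p. Poly_Mapping.lookup p a * Poly_Mapping.lookup q (w - a))"
  for p q :: "'n::finite lpoly"
proof -
  have "(\<Sum>b. Poly_Mapping.lookup q b when w = a + b) = Poly_Mapping.lookup q (w - a)" for a
  proof -
    have "(\<lambda>b. Poly_Mapping.lookup q b when w = a + b) = (\<lambda>b. Poly_Mapping.lookup q b when b = w - a)"
      by (auto simp: fun_eq_iff when_def algebra_simps)
    then show ?thesis by (simp only: Sum_any_when_equal)
  qed
  then have "Poly_Mapping.lookup (p * q) w =
      (\<Sum>a. Poly_Mapping.lookup p a * Poly_Mapping.lookup q (w - a))"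
    by (simp add: lookup_mult)
  also have "\<dots> = (\<Sum>a\<in>Poly_Mapping.keys p. Poly_Mapping.lookup p a * Poly_Mapping.lookup q (w - a))"
    by (rule Sum_any.expand_superset) (auto simp: in_keys_iff)
  finally show ?thesis .
qed

lemma mul_series_superset:
  assumes "finite K" "Poly_Mapping.keys p \<subseteq> K"
  shows "mul_series p f w = (\<Sum>u\<in>K. Poly_Mapping.lookup p u * f (w - u))"
  unfolding mul_series_def
  by (rule sum.mono_neutral_left) (use assms in \<open>auto simp: in_keys_iff\<close>)

lemma mul_series_add: "mul_series (p + q) f w = mul_series p f w + mul_series q f w"
proof -
  let ?K = "Poly_Mapping.keys p \<union> Poly_Mapping.keys q"
  have "mul_series (p + q) f w = (\<Sum>u\<in>?K. Poly_Mapping.lookup (p + q) u * f (w - u))"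
    by (rule mul_series_superset) (auto simp: keys_add)
  also have "\<dots> = (\<Sum>u\<in>?K. Poly_Mapping.lookup p u * f (w - u)) +
                   (\<Sum>u\<in>?K. Poly_Mapping.lookup q u * f (w - u))"
    by (simp add: lookup_add sum.distrib algebra_simps)
  also have "\<dots> = mul_series p f w + mul_series q f w"
    by (simp add: mul_series_superset[symmetric])
  finally show ?thesis .
qed

lemma mul_series_diff: "mul_series (p - q) f w = mul_series p f w - mul_series q f w"
  using mul_series_add[of p "- q" f w] by (simp add: mul_series_def sum_negf)

lemma mul_series_xmon: "mul_series (xmon a) f w = f (w - a)"
  by (subst mul_series_superset[of "{a}"]) (auto simp: xmon_def)

lemma mul_series_1: "mul_series 1 f = f"
  using mul_series_xmon[of 0 f] by (auto simp: xmon_def)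

lemma mul_series_sum_right:
  "finite I \<Longrightarrow> mul_series p (\<lambda>w. \<Sum>i\<in>I. f i w) w = (\<Sum>i\<in>I. mul_series p (f i) w)"
  unfolding mul_series_def by (simp add: sum_distrib_left sum.swap[of _ I])

lemma mul_series_shift: "mul_series p (\<lambda>y. f (y - c)) w = mul_series p f (w - c)"
  unfolding mul_series_def by (simp add: algebra_simps)

lemma mul_series_lookup: "mul_series p (Poly_Mapping.lookup q) = Poly_Mapping.lookup (p * q)"
  by (simp add: fun_eq_iff mul_series_def lookup_times_sum_keys)

lemma mul_series_times: "mul_series (p * q) f = mul_series p (mul_series q f)"
proof
  fix w
  define K where "K = (\<lambda>(a, b). a + b) ` (Poly_Mapping.keys p \<times> Poly_Mapping.keys q)"
  have K: "finite K" "Poly_Mapping.keys (p * q) \<subseteq> K"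
    using keys_mult[of p q] by (auto simp: K_def)
  have shift: "(\<Sum>u\<in>K. Poly_Mapping.lookup q (u - a) * f (w - u)) = mul_series q f (w - a)"
    if a: "a \<in> Poly_Mapping.keys p" for a
  proof -
    have "(\<Sum>u\<in>K. Poly_Mapping.lookup q (u - a) * f (w - u)) =
          (\<Sum>b\<in>(\<lambda>u. u - a) ` K. Poly_Mapping.lookup q b * f (w - a - b))"
      by (subst sum.reindex) (auto simp: inj_on_def algebra_simps)
    also have "\<dots> = mul_series q f (w - a)"
      using K(1) a by (intro mul_series_superset[symmetric]) (force simp: K_def)+
    finally show ?thesis .
  qed
  have "mul_series (p * q) f w = (\<Sum>u\<in>K. Poly_Mapping.lookup (p * q) u * f (w - u))"
    by (rule mul_series_superset[OF K])
  also have "\<dots> = (\<Sum>a\<in>Poly_Mapping.keys p. Poly_Mapping.lookup p a *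
                     (\<Sum>u\<in>K. Poly_Mapping.lookup q (u - a) * f (w - u)))"
    by (simp add: lookup_times_sum_keys sum_distrib_left sum_distrib_right sum.swap[of _ K] mult.assoc)
  also have "\<dots> = mul_series p (mul_series q f) w"
    by (simp add: mul_series_def shift)
  finally show "mul_series (p * q) f w = mul_series p (mul_series q f) w" .
qed

lemma lookup_xmon_times: "Poly_Mapping.lookup (xmon c * q) w = Poly_Mapping.lookup q (w - c)"
  by (simp flip: mul_series_lookup add: mul_series_xmon)

lemma xmon_add: "xmon (a + b) = xmon a * xmon b"
  by (simp add: xmon_def mult_single)

lemma xmon_0: "xmon 0 = 1"
  by (simp add: xmon_def)

lemma xmon_sum: "finite T \<Longrightarrow> xmon (\<Sum>v\<in>T. f v) = (\<Prod>v\<in>T. xmon (f v))"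
  by (induction T rule: finite_induct) (auto simp: xmon_add xmon_0)

lemma emb_add: "emb (u + v) = emb u + emb v"
  and emb_diff: "emb (u - v) = emb u - emb v"
  and emb_minus: "emb (- u) = - emb u"
  and emb_0 [simp]: "emb 0 = 0"
  and emb_smult: "emb (k *s v) = real_of_int k *\<^sub>R emb v"
  by (simp_all add: emb_def vec_eq_iff)

lemma emb_sum: "emb (\<Sum>v\<in>T. f v) = (\<Sum>v\<in>T. emb (f v))"
  by (induction T rule: infinite_finite_induct) (auto simp: emb_add)

lemma emb_eq_iff: "emb u = emb v \<longleftrightarrow> u = v"
  by (auto simp: emb_def vec_eq_iff)

lemma emb_eq_0_iff: "emb u = 0 \<longleftrightarrow> u = 0"
  using emb_eq_iff[of u 0] by simp

lemma inj_emb: "inj emb"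
  by (auto intro: injI simp: emb_eq_iff)

lemma inj_on_emb: "inj_on emb A"
  using inj_emb by (rule inj_on_subset) simp

lemma finite_bounded_int_vecs: "finite {u :: int ^ 'n::finite. \<forall>i. \<bar>u $ i\<bar> \<le> K i}"
proof (rule finite_subset)
  show "{u :: int ^ 'n. \<forall>i. \<bar>u $ i\<bar> \<le> K i} \<subseteq> vec_lambda ` (\<Pi>\<^sub>E i\<in>UNIV. {- K i..K i})"
  proof
    fix u :: "int ^ 'n" assume "u \<in> {u. \<forall>i. \<bar>u $ i\<bar> \<le> K i}"
    then show "u \<in> vec_lambda ` (\<Pi>\<^sub>E i\<in>UNIV. {- K i..K i})"
      by (intro image_eqI[of _ _ "vec_nth u"]) (auto simp: PiE_UNIV_domain abs_le_iff minus_le_iff)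
  qed
qed (intro finite_imageI finite_PiE; simp)

lemma primitive_divisor_unit:
  assumes "primitive v" "\<And>i. k dvd v $ i"
  shows "\<bar>k\<bar> = 1"
proof -
  have "v = k *s (\<chi> i. v $ i div k)"
    using assms(2) by (simp add: vec_eq_iff)
  then have "k = 1 \<or> k = -1"
    using assms(1) unfolding primitive_def by blast
  then show ?thesis by auto
qed

lemma primitive_multiple_exists:
  fixes z :: "int ^ 'n::finite"
  assumes "z \<noteq> 0"
  obtains v m where "primitive v" "0 < m" "z = m *s v"
proof -
  define m where "m = Gcd (range (\<lambda>i. z $ i))"
  have dvd: "m dvd z $ i" for i
    unfolding m_def by (rule Gcd_dvd) auto
  have "m \<noteq> 0"
    using assms by (auto simp: m_def Gcd_0_iff vec_eq_iff)
  then have m: "0 < m"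
    unfolding m_def by (metis Gcd_int_greater_eq_0 less_le)
  define v where "v = (\<chi> i. z $ i div m)"
  have z: "z = m *s v"
    using dvd by (simp add: v_def vec_eq_iff)
  have "primitive v"
    unfolding primitive_def
  proof (intro conjI allI impI)
    show "v \<noteq> 0" using z assms by auto
    fix w k assume "v = k *s w"
    then have "m * k dvd z $ i" for i
      using z by (simp add: vec_eq_iff)
    then have "m * k dvd m"
      unfolding m_def by (intro Gcd_greatest) auto
    then have "m * k dvd m * 1"
      by simp
    then have "k dvd 1"
      using m by (subst (asm) dvd_mult_cancel_left) simp
    then show "k = 1 \<or> k = -1"
      by (simp add: zdvd1_eq) arith
  qed
  with m z show thesis by (intro that)
qed

lemma primitive_coprime_proportional:
  assumes p: "primitive p" and v: "primitive v"
    and cop: "coprime b a" and ba: "\<And>j. b * p $ j = a * v $ j"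
  shows "p = v \<or> p = - v"
proof -
  have "b dvd v $ j" for j
  proof -
    have "b dvd a * v $ j" by (metis ba dvd_triv_left)
    with cop show ?thesis by (simp add: coprime_dvd_mult_right_iff)
  qed
  with v have "\<bar>b\<bar> = 1" by (rule primitive_divisor_unit)
  moreover have "a dvd p $ j" for j
  proof -
    have "a dvd b * p $ j" by (metis ba dvd_triv_left)
    with cop show ?thesis by (simp add: coprime_commute coprime_dvd_mult_right_iff)
  qed
  with p have "\<bar>a\<bar> = 1" by (rule primitive_divisor_unit)
  ultimately have "b \<noteq> 0" "a = b \<or> a = - b"
    by arith+
  then have "p $ j = (if a = b then v $ j else - v $ j)" for j
    using ba[of j] by (auto simp flip: mult_minus_right)
  then show ?thesis
    by (auto simp: vec_eq_iff)
qed

text \<open>Write \<open>t = a / b\<close> in lowest terms.\<close>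
lemma primitive_pos_multiple_eq:
  fixes p v :: "int ^ 'n::finite"
  assumes p: "primitive p" and v: "primitive v"
    and pv: "emb p = t *\<^sub>R emb v" and t: "0 < t"
  shows "p = v"
proof -
  obtain i where i: "v $ i \<noteq> 0"
    using v by (auto simp: primitive_def vec_eq_iff)
  have cross: "v $ i * p $ j = p $ i * v $ j" for j
  proof -
    have "real_of_int (p $ j) = t * real_of_int (v $ j)" for j
      using arg_cong[OF pv, of "\<lambda>x. x $ j"] by (simp add: emb_def)
    then have "real_of_int (v $ i * p $ j) = real_of_int (p $ i * v $ j)"
      by simp
    then show ?thesis by (simp only: of_int_eq_iff)
  qed
  define d where "d = gcd (v $ i) (p $ i)"
  define a where "a = p $ i div d"
  define b where "b = v $ i div d"
  have "d \<noteq> 0"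
    using i by (simp add: d_def)
  have "b * p $ j = a * v $ j" for j
  proof -
    have "d * (b * p $ j) = d * (a * v $ j)"
      using cross[of j] by (simp add: a_def b_def d_def algebra_simps)
    with \<open>d \<noteq> 0\<close> show ?thesis by simp
  qed
  moreover have "coprime b a"
    using i by (simp add: a_def b_def d_def div_gcd_coprime)
  ultimately have "p = v \<or> p = - v"
    using primitive_coprime_proportional[OF p v] by blast
  moreover have "p \<noteq> - v"
  proof
    assume "p = - v"
    with pv have "- emb v = t *\<^sub>R emb v"
      by (simp add: emb_minus)
    then have "(1 + t) *\<^sub>R emb v = 0"
      by (metis add.commute add.right_inverse scaleR_add_left scaleR_one)
    with t v show False
      by (simp add: emb_eq_0_iff primitive_def add_pos_pos)
  qed
  ultimately show ?thesis by blast
qed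

definition lat_independent :: "(int ^ 'n::finite) set \<Rightarrow> bool" where
  "lat_independent P \<longleftrightarrow> finite P \<and> independent (emb ` P)"

definition lat_cone :: "(int ^ 'n::finite) set \<Rightarrow> (real ^ 'n) set" where
  "lat_cone P = {x. \<exists>c. (\<forall>v\<in>P. 0 \<le> c v) \<and> x = (\<Sum>v\<in>P. c v *\<^sub>R emb v)}"

lemma lat_independent_iff:
  "lat_independent P \<longleftrightarrow> finite P \<and> (\<forall>c. (\<Sum>v\<in>P. c v *\<^sub>R emb v) = 0 \<longrightarrow> (\<forall>v\<in>P. c v = 0))"
proof -
  have reindex: "(\<Sum>x\<in>emb ` P. c x *\<^sub>R x) = (\<Sum>v\<in>P. c (emb v) *\<^sub>R emb v)" for c
    by (simp add: sum.reindex[OF inj_on_emb])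
  have "(\<forall>c. (\<Sum>v\<in>P. c (emb v) *\<^sub>R emb v) = 0 \<longrightarrow> (\<forall>v\<in>P. c (emb v) = 0)) \<longleftrightarrow>
        (\<forall>d. (\<Sum>v\<in>P. d v *\<^sub>R emb v) = 0 \<longrightarrow> (\<forall>v\<in>P. d v = 0))"
  proof (intro iffI allI impI)
    fix d assume "\<forall>c. (\<Sum>v\<in>P. c (emb v) *\<^sub>R emb v) = 0 \<longrightarrow> (\<forall>v\<in>P. c (emb v) = 0)"
    from this[rule_format, of "d \<circ> inv emb"]
    show "(\<Sum>v\<in>P. d v *\<^sub>R emb v) = 0 \<Longrightarrow> \<forall>v\<in>P. d v = 0"
      by (simp add: inv_f_f[OF inj_emb])
  next
    fix c assume "\<forall>d. (\<Sum>v\<in>P. d v *\<^sub>R emb v) = 0 \<longrightarrow> (\<forall>v\<in>P. d v = 0)"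
    from this[rule_format, of "c \<circ> emb"]
    show "(\<Sum>v\<in>P. c (emb v) *\<^sub>R emb v) = 0 \<Longrightarrow> \<forall>v\<in>P. c (emb v) = 0"
      by simp
  qed
  then show ?thesis
    unfolding lat_independent_def independent_explicit reindex
    by (simp add: finite_image_iff[OF inj_on_emb])
qed

lemma lat_independent_finite: "lat_independent P \<Longrightarrow> finite P"
  by (simp add: lat_independent_def)

lemma lat_independent_coeff_eq:
  assumes "lat_independent P" "(\<Sum>v\<in>P. c v *\<^sub>R emb v) = (\<Sum>v\<in>P. d v *\<^sub>R emb v)" "v \<in> P"
  shows "c v = d v"
proof -
  have "(\<Sum>v\<in>P. (c v - d v) *\<^sub>R emb v) = 0"
    using assms(2) by (simp add: scaleR_diff_left sum_subtractf)
  with assms(1,3) show ?thesis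
    unfolding lat_independent_iff by fastforce
qed

lemma lat_independent_subset: "lat_independent P \<Longrightarrow> T \<subseteq> P \<Longrightarrow> lat_independent T"
  unfolding lat_independent_def by (meson finite_subset image_mono independent_mono)

lemma lat_independent_nonzero: "lat_independent P \<Longrightarrow> 0 \<notin> P"
  unfolding lat_independent_def using dependent_zero[of "emb ` P"] by force

lemma lat_independent_rescale:
  assumes P: "lat_independent P"
    and f: "\<And>v. v \<in> P \<Longrightarrow> emb (f v) = k v *\<^sub>R emb v" and k: "\<And>v. v \<in> P \<Longrightarrow> k v \<noteq> 0"
  shows "lat_independent (f ` P)"
proof -
  have fin: "finite P"
    using P by (rule lat_independent_finite)
  have inj: "inj_on f P"
  proof (rule inj_onI, rule ccontr)
    fix v w assume vw: "v \<in> P" "w \<in> P" "f v = f w" "v \<noteq> w"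
    have "k v *\<^sub>R emb v = k w *\<^sub>R emb w"
      using f[OF vw(1)] f[OF vw(2)] vw(3) by simp
    then have "(\<Sum>u\<in>P. (if u = v then k v else 0) *\<^sub>R emb u) = (\<Sum>u\<in>P. (if u = w then k w else 0) *\<^sub>R emb u)"
      using vw by (simp add: sum_scaleR_if_eq fin)
    then have "(if v = v then k v else 0) = (if v = w then k w else 0)"
      by (rule lat_independent_coeff_eq[OF P _ vw(1)])
    with vw(4) k[OF vw(1)] show False by simp
  qed
  show ?thesis
    unfolding lat_independent_iff
  proof (intro conjI allI impI ballI)
    show "finite (f ` P)" using fin by simp
    fix c p assume c: "(\<Sum>p\<in>f ` P. c p *\<^sub>R emb p) = 0" and p: "p \<in> f ` P"
    have "(\<Sum>v\<in>P. (c (f v) * k v) *\<^sub>R emb v) = (\<Sum>v\<in>P. c (f v) *\<^sub>R emb (f v))"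
      by (rule sum.cong) (auto simp: f)
    also have "\<dots> = 0"
      using c by (simp add: sum.reindex[OF inj])
    finally have "(\<Sum>v\<in>P. (c (f v) * k v) *\<^sub>R emb v) = 0" .
    then have "\<forall>v\<in>P. c (f v) * k v = 0"
      using P[unfolded lat_independent_iff, THEN conjunct2, rule_format, of "\<lambda>v. c (f v) * k v"]
      by blast
    with p k show "c p = 0" by auto
  qed
qed

lemma cone_gen_emb_image: "cone_gen (emb ` P) = lat_cone P"
proof (intro set_eqI iffI)
  fix x assume "x \<in> cone_gen (emb ` P)"
  then obtain c where "\<forall>y\<in>emb ` P. 0 \<le> c y" "x = (\<Sum>y\<in>emb ` P. c y *\<^sub>R y)"
    unfolding cone_gen_def by blast
  then show "x \<in> lat_cone P"
    unfolding lat_cone_def by (auto simp: sum.reindex[OF inj_on_emb] intro!: exI[of _ "c \<circ> emb"])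
next
  fix x assume "x \<in> lat_cone P"
  then obtain c where "\<forall>v\<in>P. 0 \<le> c v" "x = (\<Sum>v\<in>P. c v *\<^sub>R emb v)"
    unfolding lat_cone_def by blast
  then show "x \<in> cone_gen (emb ` P)"
    unfolding cone_gen_def
    by (auto simp: sum.reindex[OF inj_on_emb] inv_f_f[OF inj_emb] intro!: exI[of _ "c \<circ> inv emb"])
qed

lemma zero_in_lat_cone: "0 \<in> lat_cone P"
  unfolding lat_cone_def by (auto intro!: exI[of _ "\<lambda>_. 0"])

lemma emb_in_lat_cone: "finite P \<Longrightarrow> v \<in> P \<Longrightarrow> emb v \<in> lat_cone P"
  unfolding lat_cone_def
  by (auto simp: sum_scaleR_if_eq intro!: exI[of _ "\<lambda>w. if w = v then 1 else 0"])

lemma lat_cone_add: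
  assumes "x \<in> lat_cone P" "y \<in> lat_cone P"
  shows "x + y \<in> lat_cone P"
proof -
  obtain c d where "\<forall>v\<in>P. 0 \<le> c v" "x = (\<Sum>v\<in>P. c v *\<^sub>R emb v)"
    and "\<forall>v\<in>P. 0 \<le> d v" "y = (\<Sum>v\<in>P. d v *\<^sub>R emb v)"
    using assms unfolding lat_cone_def by blast
  then show ?thesis
    unfolding lat_cone_def
    by (intro CollectI exI[of _ "\<lambda>v. c v + d v"]) (auto simp: scaleR_add_left sum.distrib)
qed

lemma conic_lat_cone: "conic (lat_cone P)"
  unfolding conic_def
proof (intro allI impI)
  fix x and t :: real
  assume "x \<in> lat_cone P" "0 \<le> t"
  then obtain c where "\<forall>v\<in>P. 0 \<le> c v" "x = (\<Sum>v\<in>P. c v *\<^sub>R emb v)"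
    unfolding lat_cone_def by blast
  with \<open>0 \<le> t\<close> show "t *\<^sub>R x \<in> lat_cone P"
    unfolding lat_cone_def
    by (intro CollectI exI[of _ "\<lambda>v. t * c v"]) (auto simp: scaleR_sum_right)
qed

lemma convex_lat_cone: "convex (lat_cone P)"
  unfolding convex_def using lat_cone_add conic_lat_cone[unfolded conic_def] by blast

lemma lat_cone_sum:
  "finite I \<Longrightarrow> (\<And>i. i \<in> I \<Longrightarrow> f i \<in> lat_cone P) \<Longrightarrow> (\<Sum>i\<in>I. f i) \<in> lat_cone P"
  by (induction I rule: finite_induct) (auto simp: zero_in_lat_cone lat_cone_add)

lemma lat_cone_subsetI:
  assumes "finite P" "\<And>v. v \<in> P \<Longrightarrow> emb v \<in> lat_cone Q"
  shows "lat_cone P \<subseteq> lat_cone Q"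
proof
  fix x assume "x \<in> lat_cone P"
  then obtain c where "\<forall>v\<in>P. 0 \<le> c v" "x = (\<Sum>v\<in>P. c v *\<^sub>R emb v)"
    unfolding lat_cone_def by blast
  with assms show "x \<in> lat_cone Q"
    by (auto intro!: lat_cone_sum conicD[OF conic_lat_cone])
qed

lemma lat_cone_mono: "finite Q \<Longrightarrow> P \<subseteq> Q \<Longrightarrow> lat_cone P \<subseteq> lat_cone Q"
  by (rule lat_cone_subsetI) (auto intro: emb_in_lat_cone finite_subset)

lemma lat_cone_empty [simp]: "lat_cone {} = {0}"
  by (auto simp: lat_cone_def)

lemma mem_lat_cone_singleton: "x \<in> lat_cone {v} \<longleftrightarrow> (\<exists>s\<ge>0. x = s *\<^sub>R emb v)"
  by (auto simp: lat_cone_def)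

lemma lat_cone_restrict:
  assumes "finite P" "T \<subseteq> P" "\<forall>v\<in>P. 0 \<le> c v" "\<forall>v\<in>P - T. c v = 0"
  shows "(\<Sum>v\<in>P. c v *\<^sub>R emb v) \<in> lat_cone T"
proof -
  have "(\<Sum>v\<in>P. c v *\<^sub>R emb v) = (\<Sum>v\<in>T. c v *\<^sub>R emb v)"
    using assms by (intro sum.mono_neutral_right) auto
  with assms show ?thesis
    unfolding lat_cone_def by auto
qed

lemma lat_cone_rescale:
  assumes "finite Z" and f: "\<And>z. z \<in> Z \<Longrightarrow> emb (f z) = k z *\<^sub>R emb z" and k: "\<And>z. z \<in> Z \<Longrightarrow> 0 < k z"
  shows "lat_cone (f ` Z) = lat_cone Z"
proof
  show "lat_cone (f ` Z) \<subseteq> lat_cone Z"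
  proof (rule lat_cone_subsetI)
    fix v assume "v \<in> f ` Z"
    then obtain z where "z \<in> Z" "v = f z"
      by blast
    with assms show "emb v \<in> lat_cone Z"
      by (simp add: less_imp_le conicD[OF conic_lat_cone] emb_in_lat_cone)
  qed (use assms in simp)
  show "lat_cone Z \<subseteq> lat_cone (f ` Z)"
  proof (rule lat_cone_subsetI)
    fix z assume z: "z \<in> Z"
    have "emb (f z) \<in> lat_cone (f ` Z)"
      using z assms(1) by (simp add: emb_in_lat_cone)
    then have "(1 / k z) *\<^sub>R emb (f z) \<in> lat_cone (f ` Z)"
      using k[OF z] by (simp add: conicD[OF conic_lat_cone])
    then show "emb z \<in> lat_cone (f ` Z)"
      using f[OF z] k[OF z] by simp
  qed (use assms in simp)
qed

lemma rational_simplicial_cone_primitive: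
  assumes "rational_simplicial_cone \<tau>"
  obtains P where "lat_independent P" "\<forall>p\<in>P. primitive p" "\<tau> = lat_cone P"
proof -
  obtain S where S: "finite S" "S \<subseteq> range emb" "independent S" "\<tau> = cone_gen S"
    using assms unfolding rational_simplicial_cone_def by blast
  define Z where "Z = emb -` S"
  have SZ: "S = emb ` Z"
    using S(2) by (auto simp: Z_def)
  have Z: "lat_independent Z"
    using S(1,3) by (simp add: lat_independent_def SZ finite_image_iff[OF inj_on_emb])
  have "\<forall>z\<in>Z. \<exists>v m. primitive v \<and> 0 < m \<and> z = m *s v"
    using lat_independent_nonzero[OF Z] by (metis primitive_multiple_exists)
  then obtain p m where pm: "\<And>z. z \<in> Z \<Longrightarrow> primitive (p z) \<and> 0 < m z \<and> z = m z *s p z"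
    by metis
  have emb_p: "emb (p z) = (1 / real_of_int (m z)) *\<^sub>R emb z" if "z \<in> Z" for z
  proof -
    have "emb z = real_of_int (m z) *\<^sub>R emb (p z)"
      using pm[OF that] emb_smult by metis
    then show ?thesis
      using pm[OF that] by simp
  qed
  have pos: "0 < 1 / real_of_int (m z)" if "z \<in> Z" for z
    using pm[OF that] by simp
  show thesis
  proof
    show "lat_independent (p ` Z)"
      using lat_independent_rescale[OF Z emb_p] pos by force
    show "\<forall>q\<in>p ` Z. primitive q"
      using pm by blast
    show "\<tau> = lat_cone (p ` Z)"
      using S(4) SZ lat_cone_rescale[OF lat_independent_finite[OF Z] emb_p pos]
      by (simp add: cone_gen_emb_image)
  qed
qed

definition cone_join :: "(real ^ 'n) set \<Rightarrow> (real ^ 'n) set \<Rightarrow> (real ^ 'n) set" where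
  "cone_join \<gamma> \<tau> = {a + b | a b. a \<in> \<gamma> \<and> b \<in> \<tau>}"

lemma lat_cone_Un:
  assumes "finite S" "finite T" "S \<inter> T = {}"
  shows "lat_cone (S \<union> T) = cone_join (lat_cone S) (lat_cone T)"
proof
  show "lat_cone (S \<union> T) \<subseteq> cone_join (lat_cone S) (lat_cone T)"
  proof
    fix x assume "x \<in> lat_cone (S \<union> T)"
    then obtain c where c: "\<forall>v\<in>S \<union> T. 0 \<le> c v" "x = (\<Sum>v\<in>S \<union> T. c v *\<^sub>R emb v)"
      unfolding lat_cone_def by blast
    then have "x = (\<Sum>v\<in>S. c v *\<^sub>R emb v) + (\<Sum>v\<in>T. c v *\<^sub>R emb v)"
      using assms by (simp add: sum.union_disjoint)
    with c(1) show "x \<in> cone_join (lat_cone S) (lat_cone T)"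
      unfolding cone_join_def lat_cone_def by blast
  qed
  show "cone_join (lat_cone S) (lat_cone T) \<subseteq> lat_cone (S \<union> T)"
    using lat_cone_mono[of "S \<union> T" S] lat_cone_mono[of "S \<union> T" T] assms
    by (auto simp: cone_join_def intro!: lat_cone_add)
qed

lemma lat_cone_disjoint:
  assumes indep: "lat_independent (S \<union> T)" and "S \<inter> T = {}"
  shows "lat_cone S \<inter> lat_cone T = {0}"
proof -
  have fin: "finite (S \<union> T)"
    using indep by (rule lat_independent_finite)
  have "x = 0" if x: "x \<in> lat_cone S" "x \<in> lat_cone T" for x
  proof -
    obtain a where a: "x = (\<Sum>v\<in>S. a v *\<^sub>R emb v)"
      using x(1) unfolding lat_cone_def by blast
    obtain b where b: "x = (\<Sum>v\<in>T. b v *\<^sub>R emb v)"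
      using x(2) unfolding lat_cone_def by blast
    have eq: "(\<Sum>v\<in>S \<union> T. (if v \<in> S then a v else 0) *\<^sub>R emb v) =
              (\<Sum>v\<in>S \<union> T. (if v \<in> T then b v else 0) *\<^sub>R emb v)"
      using a b fin by (simp add: sum_scaleR_if_subset)
    have "a v = 0" if "v \<in> S" for v
      using lat_independent_coeff_eq[OF indep eq, of v] that assms(2) by auto
    with a show "x = 0"
      by simp
  qed
  then show ?thesis
    using zero_in_lat_cone by blast
qed

lemma face_of_lat_cone:
  assumes P: "lat_independent P" and TP: "T \<subseteq> P"
  shows "lat_cone T face_of lat_cone P"
proof -
  have fin: "finite P"
    using P by (rule lat_independent_finite)
  show ?thesis
    unfolding face_of_def
  proof (intro conjI ballI impI)
    show "lat_cone T \<subseteq> lat_cone P"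
      using fin TP by (rule lat_cone_mono)
    show "convex (lat_cone T)"
      by (rule convex_lat_cone)
    fix a b x
    assume "a \<in> lat_cone P" "b \<in> lat_cone P" "x \<in> lat_cone T" "x \<in> open_segment a b"
    then obtain \<alpha> \<beta> \<gamma> u where
      \<alpha>: "\<forall>v\<in>P. 0 \<le> \<alpha> v" "a = (\<Sum>v\<in>P. \<alpha> v *\<^sub>R emb v)" and
      \<beta>: "\<forall>v\<in>P. 0 \<le> \<beta> v" "b = (\<Sum>v\<in>P. \<beta> v *\<^sub>R emb v)" and
      \<gamma>: "x = (\<Sum>v\<in>T. \<gamma> v *\<^sub>R emb v)" and
      u: "0 < u" "u < 1" "x = (1 - u) *\<^sub>R a + u *\<^sub>R b"
      unfolding lat_cone_def in_segment(2) by (elim CollectE exE conjE) blast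
    have "(\<Sum>v\<in>P. ((1 - u) * \<alpha> v + u * \<beta> v) *\<^sub>R emb v) =
          (\<Sum>v\<in>P. (if v \<in> T then \<gamma> v else 0) *\<^sub>R emb v)"
      using u(3) \<alpha>(2) \<beta>(2) \<gamma>
      by (simp add: sum_scaleR_if_subset[OF fin TP] scaleR_sum_right sum.distrib scaleR_add_left)
    from lat_independent_coeff_eq[OF P this]
    have "(1 - u) * \<alpha> v + u * \<beta> v = 0" if "v \<in> P - T" for v
      using that by simp
    moreover have "0 \<le> (1 - u) * \<alpha> v" "0 \<le> u * \<beta> v" if "v \<in> P" for v
      using u \<alpha>(1) \<beta>(1) that by auto
    ultimately have "\<alpha> v = 0 \<and> \<beta> v = 0" if "v \<in> P - T" for v
      using u that by (smt (verit) DiffD1 mult_eq_0_iff)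
    with \<alpha> \<beta> show "a \<in> lat_cone T" "b \<in> lat_cone T"
      by (auto intro: lat_cone_restrict[OF fin TP])
  qed
qed

text \<open>If \<open>x + y\<close> lies in a face, then it is the midpoint of \<open>2 x\<close> and \<open>2 y\<close>.\<close>
lemma face_of_conic_summand:
  fixes C :: "'a::real_vector set"
  assumes F: "F face_of C" and C: "conic C" and "x \<in> C" "y \<in> C" "x + y \<in> F"
  shows "x \<in> F"
proof -
  have "2 *\<^sub>R x \<in> F"
  proof (cases "x = y")
    case True
    with \<open>x + y \<in> F\<close> show ?thesis by (simp add: scaleR_2)
  next
    case False
    moreover have "x + y = (1 - 1/2) *\<^sub>R (2 *\<^sub>R x) + (1/2) *\<^sub>R (2 *\<^sub>R y)"
      by simp
    ultimately have "x + y \<in> open_segment (2 *\<^sub>R x) (2 *\<^sub>R y)"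
      unfolding in_segment(2) by (intro conjI exI[of _ "1/2"]) auto
    with assms show ?thesis
      using face_ofD[OF F _ conicD[OF C, of x 2] conicD[OF C, of y 2]] by auto
  qed
  then show ?thesis
    using conicD[OF face_of_conic[OF C F], of "2 *\<^sub>R x" "1/2"] by simp
qed

lemma emb_in_face_of_lat_cone:
  assumes fin: "finite P" and F: "F face_of lat_cone P"
    and c: "\<forall>w\<in>P. 0 \<le> c w" and in_F: "(\<Sum>w\<in>P. c w *\<^sub>R emb w) \<in> F"
    and v: "v \<in> P" "0 < c v"
  shows "emb v \<in> F"
proof -
  have split: "(\<Sum>w\<in>P. c w *\<^sub>R emb w) = c v *\<^sub>R emb v + (\<Sum>w\<in>P - {v}. c w *\<^sub>R emb w)"
    using fin v(1) by (simp add: sum.remove)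
  have "c v *\<^sub>R emb v \<in> F"
  proof (rule face_of_conic_summand[OF F conic_lat_cone])
    show "c v *\<^sub>R emb v \<in> lat_cone P"
      using fin v by (auto intro: conicD[OF conic_lat_cone] emb_in_lat_cone)
    show "(\<Sum>w\<in>P - {v}. c w *\<^sub>R emb w) \<in> lat_cone P"
      using fin c by (auto intro!: lat_cone_sum conicD[OF conic_lat_cone] emb_in_lat_cone)
  qed (use in_F split in simp)
  then show ?thesis
    using conicD[OF face_of_conic[OF conic_lat_cone F], of "c v *\<^sub>R emb v" "1 / c v"] v(2) by simp
qed

lemma primitive_ray_face_of_lat_cone:
  assumes P: "lat_independent P" "\<forall>p\<in>P. primitive p" and v: "primitive v"
    and F: "cone_gen {emb v} face_of lat_cone P"
  shows "v \<in> P"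
proof -
  have fin: "finite P"
    using P(1) by (rule lat_independent_finite)
  have ray: "cone_gen {emb v} = lat_cone {v}"
    using cone_gen_emb_image[of "{v}"] by simp
  have "emb v \<in> lat_cone P"
    using F face_of_imp_subset emb_in_lat_cone[of "{v}" v] by (auto simp: ray)
  then obtain c where c: "\<forall>w\<in>P. 0 \<le> c w" "emb v = (\<Sum>w\<in>P. c w *\<^sub>R emb w)"
    unfolding lat_cone_def by blast
  obtain p where p: "p \<in> P" "c p \<noteq> 0"
    using c(2) v by (metis (no_types, lifting) emb_eq_0_iff primitive_def scale_zero_left sum.neutral)
  have "emb p \<in> lat_cone {v}"
    using emb_in_face_of_lat_cone[OF fin F[unfolded ray] c(1) _ p(1)] c p
      emb_in_lat_cone[of "{v}" v] by (simp add: order_le_neq_trans)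
  then obtain s where s: "0 \<le> s" "emb p = s *\<^sub>R emb v"
    unfolding mem_lat_cone_singleton by blast
  moreover have "s \<noteq> 0"
    using s lat_independent_nonzero[OF P(1)] p(1) by (auto simp: emb_eq_0_iff)
  ultimately have "p = v"
    using P(2) p(1) v by (intro primitive_pos_multiple_eq[of p v s]) auto
  with p(1) show ?thesis by simp
qed

lemma vec_eq_sum_axis: "x = (\<Sum>i\<in>UNIV. (x $ i) *s axis i 1)"
  for x :: "int ^ 'n::finite"
  by (simp add: vec_eq_iff sum_component axis_def if_distrib[of "\<lambda>t. _ * t"] cong: if_cong)

lemma sum_smult_delta: "finite Z \<Longrightarrow> b \<in> Z \<Longrightarrow> (\<Sum>z\<in>Z. (if z = b then 1 else 0) *s z) = b"
  for b :: "int ^ 'n::finite"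
  by (simp add: if_distrib[of "\<lambda>k. k *s _"] cong: if_cong)

lemma zbasis_coeff_eq:
  assumes "zbasis Z" "(\<Sum>z\<in>Z. c z *s z) = (\<Sum>z\<in>Z. d z *s z)" "z \<in> Z"
  shows "c z = d z"
proof -
  have "(\<Sum>z\<in>Z. (c z - d z) *s z) = 0"
    using assms(2) by (simp add: vector_sub_rdistrib sum_subtractf)
  with assms(1,3) show ?thesis
    unfolding zbasis_def by fastforce
qed

lemma zbasis_axes: "zbasis (range (\<lambda>i. axis i (1::int)) :: (int ^ 'n::finite) set)"
proof -
  have inj: "inj (\<lambda>i::'n. axis i (1::int))"
    by (auto intro: injI simp: axis_eq_axis)
  have sum_axes: "(\<Sum>z\<in>range (\<lambda>i::'n. axis i 1). c z *s z) = (\<chi> i. c (axis i 1))" for c :: "_ \<Rightarrow> int"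
    by (simp only: sum.reindex[OF inj] o_def)
      (simp add: vec_eq_iff sum_component axis_def if_distrib[of "\<lambda>t. _ * t"] cong: if_cong)
  have coord: "(\<Sum>j\<in>UNIV. axis i 1 $ j * w $ j) = w $ i" for i and w :: "int ^ 'n"
    by (simp add: axis_def if_distrib[of "\<lambda>t. t * _"] cong: if_cong)
  show ?thesis
    unfolding zbasis_def sum_axes
  proof (intro conjI allI impI ballI)
    fix w :: "int ^ 'n"
    show "\<exists>c. w = (\<chi> i. c (axis i (1::int)))"
      by (rule exI[of _ "\<lambda>z. \<Sum>j\<in>UNIV. z $ j * w $ j"]) (simp add: coord vec_eq_iff)
  qed (auto simp: vec_eq_iff)
qed

text \<open>Expand each unit vector in the basis and take the coefficients at \<open>b\<^sub>0\<close>.\<close>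
lemma zbasis_dual:
  assumes Z: "zbasis Z" and b0: "b0 \<in> Z"
  obtains d :: "'n::finite \<Rightarrow> int"
    where "\<And>b. b \<in> Z \<Longrightarrow> (\<Sum>i\<in>UNIV. b $ i * d i) = (if b0 = b then 1 else 0)"
proof -
  have fin: "finite Z"
    using Z by (simp add: zbasis_def)
  have "\<forall>i. \<exists>c. axis i (1::int) = (\<Sum>z\<in>Z. c z *s z)"
    using Z by (simp add: zbasis_def)
  then obtain C where C: "\<And>i. axis i 1 = (\<Sum>z\<in>Z. C i z *s z)"
    by metis
  have "(\<Sum>i\<in>UNIV. b $ i * C i b0) = (if b0 = b then 1 else 0)" if b: "b \<in> Z" for b
  proof -
    have "(\<Sum>z\<in>Z. (\<Sum>i\<in>UNIV. b $ i * C i z) *s z) = (\<Sum>i\<in>UNIV. (b $ i) *s axis i 1)"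
      by (simp add: C scaleR_sum_right vec_eq_iff sum_component sum_distrib_left sum_distrib_right
          sum.swap[of _ Z] mult.assoc)
    also have "\<dots> = (\<Sum>z\<in>Z. (if z = b then 1 else 0) *s z)"
      using fin b by (simp add: sum_smult_delta flip: vec_eq_sum_axis)
    finally have "(\<Sum>z\<in>Z. (\<Sum>i\<in>UNIV. b $ i * C i z) *s z) = (\<Sum>z\<in>Z. (if z = b then 1 else 0) *s z)" .
    from zbasis_coeff_eq[OF Z this b0] show ?thesis
      by simp
  qed
  then show thesis by (rule that)
qed

lemma lat_independent_zbasis:
  assumes Z: "zbasis Z"
  shows "lat_independent Z"
  unfolding lat_independent_iff
proof (intro conjI allI impI ballI)
  show fin: "finite Z"
    using Z by (simp add: zbasis_def)
  fix r b0 assume r: "(\<Sum>b\<in>Z. r b *\<^sub>R emb b) = 0" and b0: "b0 \<in> Z"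
  obtain d where d: "\<And>b. b \<in> Z \<Longrightarrow> (\<Sum>i\<in>UNIV. b $ i * d i) = (if b0 = b then 1 else 0)"
    using zbasis_dual[OF Z b0] by blast
  have comp: "(\<Sum>b\<in>Z. r b * real_of_int (b $ i)) = 0" for i
    using arg_cong[OF r, of "\<lambda>x. x $ i"] by (simp add: emb_def)
  have "r b0 = (\<Sum>b\<in>Z. r b * (if b0 = b then 1 else 0))"
    using fin b0 by (simp add: if_distrib[of "\<lambda>t. _ * t"] cong: if_cong)
  also have "\<dots> = (\<Sum>b\<in>Z. r b * real_of_int (\<Sum>i\<in>UNIV. b $ i * d i))"
    by (rule sum.cong) (simp_all add: d)
  also have "\<dots> = (\<Sum>i\<in>UNIV. real_of_int (d i) * (\<Sum>b\<in>Z. r b * real_of_int (b $ i)))"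
    by (simp add: sum_distrib_left sum.swap[of _ Z] algebra_simps)
  also have "\<dots> = 0"
    by (simp add: comp)
  finally show "r b0 = 0" .
qed

lemma zbasis_primitive:
  assumes Z: "zbasis Z" and b: "b \<in> Z"
  shows "primitive b"
  unfolding primitive_def
proof (intro conjI allI impI)
  show "b \<noteq> 0"
    using lat_independent_nonzero[OF lat_independent_zbasis[OF Z]] b by blast
  fix w k assume bw: "b = k *s w"
  have fin: "finite Z"
    using Z by (simp add: zbasis_def)
  obtain c where w: "w = (\<Sum>z\<in>Z. c z *s z)"
    using Z unfolding zbasis_def by blast
  have "(\<Sum>z\<in>Z. (k * c z) *s z) = k *s w"
    unfolding w by (simp add: vec_eq_iff sum_component sum_distrib_left mult.assoc)
  also have "\<dots> = (\<Sum>z\<in>Z. (if z = b then 1 else 0) *s z)"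
    using bw fin b by (simp add: sum_smult_delta)
  finally have "(\<Sum>z\<in>Z. (k * c z) *s z) = (\<Sum>z\<in>Z. (if z = b then 1 else 0) *s z)" .
  from zbasis_coeff_eq[OF Z this b] have "k * c b = 1"
    by simp
  then show "k = 1 \<or> k = -1"
    using zmult_eq_1_iff by blast
qed

lemma unimodular_zero_cone: "unimodular ({0} :: (real ^ 'n::finite) set)"
  unfolding unimodular_def
  by (intro exI[of _ "{}"] exI[of _ "range (\<lambda>i. axis i 1)"] conjI zbasis_axes)
    (auto simp: cone_gen_def)

section \<open>Lattice points of a simplicial cone\<close>

definition nat_span :: "(int ^ 'n::finite) set \<Rightarrow> (int ^ 'n) set" where
  "nat_span T = {\<Sum>v\<in>T. int (n v) *s v | n. True}"

lemma lat_independent_int_coeff_eq: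
  assumes "lat_independent T" "(\<Sum>v\<in>T. k v *s v) = (\<Sum>v\<in>T. l v *s v)" "v \<in> T"
  shows "k v = l v"
proof -
  have "(\<Sum>v\<in>T. real_of_int (k v) *\<^sub>R emb v) = (\<Sum>v\<in>T. real_of_int (l v) *\<^sub>R emb v)"
    using arg_cong[OF assms(2), of emb] by (simp add: emb_sum emb_smult)
  with assms(1,3) show ?thesis
    using lat_independent_coeff_eq by fastforce
qed

lemma sum_insert_fun_upd:
  assumes "finite T" "a \<notin> T"
  shows "(\<Sum>v\<in>insert a T. int ((n(a := k)) v) *s v) = int k *s a + (\<Sum>v\<in>T. int (n v) *s v)"
  using assms by (subst sum.insert) (auto intro!: sum.cong)

lemma nat_span_subset_insert:
  assumes "finite T" "a \<notin> T" "y \<in> nat_span T"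
  shows "y \<in> nat_span (insert a T)"
proof -
  obtain n where "y = (\<Sum>v\<in>T. int (n v) *s v)"
    using assms(3) by (auto simp: nat_span_def)
  then have "y = (\<Sum>v\<in>insert a T. int ((n(a := 0)) v) *s v)"
    using sum_insert_fun_upd[OF assms(1,2), of n 0] by simp
  then show ?thesis
    unfolding nat_span_def by blast
qed

lemma nat_span_insert_add:
  assumes "finite T" "a \<notin> T" "y - a \<in> nat_span (insert a T)"
  obtains n where "y = (\<Sum>v\<in>insert a T. int (n v) *s v)" "0 < n a"
proof -
  obtain m where m: "y - a = int (m a) *s a + (\<Sum>v\<in>T. int (m v) *s v)"
    using assms by (auto simp: nat_span_def)
  have "(\<Sum>v\<in>insert a T. int ((m(a := Suc (m a))) v) *s v) = int (Suc (m a)) *s a + (\<Sum>v\<in>T. int (m v) *s v)"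
    using assms(1,2) by (rule sum_insert_fun_upd)
  also have "\<dots> = y"
    using m by (simp add: algebra_simps)
  finally show thesis
    by (intro that[of "m(a := Suc (m a))"]) simp_all
qed

lemma nat_span_insert:
  assumes "finite T" "a \<notin> T"
  shows "y \<in> nat_span (insert a T) \<longleftrightarrow> y \<in> nat_span T \<or> y - a \<in> nat_span (insert a T)"
proof
  assume "y \<in> nat_span (insert a T)"
  then obtain n where y: "y = int (n a) *s a + (\<Sum>v\<in>T. int (n v) *s v)"
    using assms by (auto simp: nat_span_def)
  show "y \<in> nat_span T \<or> y - a \<in> nat_span (insert a T)"
  proof (cases "n a")
    case 0
    with y show ?thesis
      unfolding nat_span_def by auto
  next
    case (Suc k)
    have "(\<Sum>v\<in>insert a T. int ((n(a := k)) v) *s v) = int k *s a + (\<Sum>v\<in>T. int (n v) *s v)"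
      using assms by (rule sum_insert_fun_upd)
    also have "\<dots> = y - a"
      using y Suc by simp
    finally show ?thesis
      unfolding nat_span_def by (blast intro: sym)
  qed
next
  assume "y \<in> nat_span T \<or> y - a \<in> nat_span (insert a T)"
  then show "y \<in> nat_span (insert a T)"
  proof
    assume "y \<in> nat_span T"
    with assms show ?thesis
      by (rule nat_span_subset_insert)
  next
    assume "y - a \<in> nat_span (insert a T)"
    with assms obtain n where "y = (\<Sum>v\<in>insert a T. int (n v) *s v)"
      by (rule nat_span_insert_add)
    then show ?thesis
      unfolding nat_span_def by blast
  qed
qed

lemma nat_span_insert_disjoint:
  assumes indep: "lat_independent (insert a T)" and a: "a \<notin> T"
    and y: "y \<in> nat_span T"
  shows "y - a \<notin> nat_span (insert a T)"
proof
  have fin: "finite T"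
    using lat_independent_finite[OF indep] by simp
  assume "y - a \<in> nat_span (insert a T)"
  with fin a obtain m where m: "y = (\<Sum>v\<in>insert a T. int (m v) *s v)" "0 < m a"
    by (rule nat_span_insert_add)
  obtain n where "y = (\<Sum>v\<in>T. int (n v) *s v)"
    using y by (auto simp: nat_span_def)
  then have "y = (\<Sum>v\<in>insert a T. int ((n(a := 0)) v) *s v)"
    using sum_insert_fun_upd[OF fin a, of n 0] by simp
  with m have "int (m a) = int ((n(a := 0)) a)"
    by (intro lat_independent_int_coeff_eq[OF indep]) auto
  with m(2) show False
    by simp
qed

lemma sum_floor_minus_in_nat_span:
  assumes fin: "finite P" and c: "\<forall>v\<in>P. 0 < c v"
  shows "(\<Sum>v\<in>P. \<lfloor>c v\<rfloor> *s v) - (\<Sum>v\<in>{v\<in>P. real_of_int \<lfloor>c v\<rfloor> = c v}. v) \<in> nat_span P"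
proof -
  define T where "T = {v\<in>P. real_of_int \<lfloor>c v\<rfloor> = c v}"
  define n where "n v = nat (\<lfloor>c v\<rfloor> - (if v \<in> T then 1 else 0))" for v
  have n: "int (n v) = \<lfloor>c v\<rfloor> - (if v \<in> T then 1 else 0)" if "v \<in> P" for v
  proof -
    have "0 < c v"
      using c that by blast
    moreover have "1 \<le> \<lfloor>c v\<rfloor>" if "v \<in> T"
      using that \<open>0 < c v\<close> by (auto simp: T_def)
    ultimately show ?thesis
      by (auto simp: n_def)
  qed
  have "(\<Sum>v\<in>P. int (n v) *s v) = (\<Sum>v\<in>P. \<lfloor>c v\<rfloor> *s v - (if v \<in> T then v else 0))"
    by (rule sum.cong) (auto simp: n algebra_simps)
  also have "\<dots> = (\<Sum>v\<in>P. \<lfloor>c v\<rfloor> *s v) - (\<Sum>v\<in>T. v)"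
    using fin by (simp add: sum_subtractf sum.If_cases T_def Int_def conj_commute)
  finally show ?thesis
    unfolding nat_span_def T_def by (blast intro: sym)
qed

lemma mul_series_one_minus_xmon_nat_span:
  assumes "lat_independent (insert a T)" "a \<notin> T"
  shows "mul_series (1 - xmon a) (\<lambda>y. of_bool (y \<in> nat_span (insert a T))) =
         (\<lambda>y. of_bool (y \<in> nat_span T))"
proof
  fix y
  have "finite T"
    using lat_independent_finite[OF assms(1)] by simp
  with assms show "mul_series (1 - xmon a) (\<lambda>y. of_bool (y \<in> nat_span (insert a T))) y =
                   of_bool (y \<in> nat_span T)"
    using nat_span_insert[of T a y] nat_span_insert_disjoint[of a T y]
    by (auto simp: mul_series_diff mul_series_1 mul_series_xmon)
qed

lemma mul_series_nat_span:
  assumes "lat_independent T"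
  shows "mul_series (\<Prod>v\<in>T. 1 - xmon v) (\<lambda>y. of_bool (y \<in> nat_span T)) = Poly_Mapping.lookup 1"
  using lat_independent_finite[OF assms] assms
proof (induction T rule: finite_induct)
  case empty
  then show ?case
    by (auto simp: fun_eq_iff mul_series_1 nat_span_def lookup_one when_def)
next
  case (insert a T)
  have "(\<Prod>v\<in>insert a T. 1 - xmon v) = (\<Prod>v\<in>T. 1 - xmon v) * (1 - xmon a)"
    using insert.hyps by (simp add: mult.commute)
  then have "mul_series (\<Prod>v\<in>insert a T. 1 - xmon v) (\<lambda>y. of_bool (y \<in> nat_span (insert a T))) =
        mul_series (\<Prod>v\<in>T. 1 - xmon v) (\<lambda>y. of_bool (y \<in> nat_span T))"
    by (simp only: mul_series_times mul_series_one_minus_xmon_nat_span[OF insert.prems insert.hyps(2)])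
  also have "\<dots> = Poly_Mapping.lookup 1"
    using insert.IH lat_independent_subset[OF insert.prems subset_insertI] by blast
  finally show ?case .
qed

section \<open>Simplicial fans\<close>

locale simplicial_fan =
  fixes \<Delta> :: "(real ^ 'n::finite) set set" and \<sigma> :: "(real ^ 'n) set"
  assumes subdivision: "rational_simplicial_subdivision \<Delta> \<sigma>"
    and nonempty: "\<Delta> \<noteq> {}"
begin

lemma finite_fan: "finite \<Delta>"
  and face_in_fan: "\<tau> \<in> \<Delta> \<Longrightarrow> F face_of \<tau> \<Longrightarrow> F \<noteq> {} \<Longrightarrow> F \<in> \<Delta>"
  and inter_face_of: "\<tau> \<in> \<Delta> \<Longrightarrow> \<tau>' \<in> \<Delta> \<Longrightarrow> (\<tau> \<inter> \<tau>') face_of \<tau>"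
  and Union_fan: "\<Union>\<Delta> = \<sigma>"
  and rational_simplicial: "\<tau> \<in> \<Delta> \<Longrightarrow> rational_simplicial_cone \<tau>"
  using subdivision unfolding rational_simplicial_subdivision_def is_fan_def by blast+

lemma gens_eqI:
  assumes "\<tau> \<in> \<Delta>" "lat_independent P" "\<forall>p\<in>P. primitive p" "\<tau> = lat_cone P"
  shows "gens \<Delta> \<tau> = P"
proof
  show "gens \<Delta> \<tau> \<subseteq> P"
    using primitive_ray_face_of_lat_cone[OF assms(2,3)] assms(4)
    unfolding gens_def ray_gens_def by auto
  show "P \<subseteq> gens \<Delta> \<tau>"
  proof
    fix p assume p: "p \<in> P"
    have ray: "cone_gen {emb p} = lat_cone {p}"
      using cone_gen_emb_image[of "{p}"] by simp
    have face: "cone_gen {emb p} face_of \<tau>"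
      unfolding ray assms(4) using face_of_lat_cone[OF assms(2)] p by simp
    then have "cone_gen {emb p} \<in> \<Delta>"
      using face_in_fan[OF assms(1)] zero_in_lat_cone by (auto simp: ray)
    with face p assms(3) show "p \<in> gens \<Delta> \<tau>"
      unfolding gens_def ray_gens_def by auto
  qed
qed

lemma gens_props:
  assumes "\<tau> \<in> \<Delta>"
  shows lat_independent_gens: "lat_independent (gens \<Delta> \<tau>)"
    and lat_cone_gens: "lat_cone (gens \<Delta> \<tau>) = \<tau>"
    and primitive_gens: "\<forall>p\<in>gens \<Delta> \<tau>. primitive p"
proof -
  obtain P where "lat_independent P" "\<forall>p\<in>P. primitive p" "\<tau> = lat_cone P"
    using rational_simplicial_cone_primitive[OF rational_simplicial[OF assms]] by blast
  with gens_eqI[OF assms this] show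
    "lat_independent (gens \<Delta> \<tau>)" "lat_cone (gens \<Delta> \<tau>) = \<tau>" "\<forall>p\<in>gens \<Delta> \<tau>. primitive p"
    by simp_all
qed

lemma finite_gens: "\<tau> \<in> \<Delta> \<Longrightarrow> finite (gens \<Delta> \<tau>)"
  using lat_independent_finite lat_independent_gens by blast

lemma gens_subset_ray_gens: "gens \<Delta> \<tau> \<subseteq> ray_gens \<Delta>"
  unfolding gens_def by blast

lemma gens_inj: "\<tau> \<in> \<Delta> \<Longrightarrow> \<rho> \<in> \<Delta> \<Longrightarrow> gens \<Delta> \<tau> = gens \<Delta> \<rho> \<Longrightarrow> \<tau> = \<rho>"
  using lat_cone_gens by metis

lemma emb_gens_in_cone: "\<tau> \<in> \<Delta> \<Longrightarrow> v \<in> gens \<Delta> \<tau> \<Longrightarrow> emb v \<in> \<tau>"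
  using emb_in_lat_cone finite_gens lat_cone_gens by metis

lemma zero_in_cone: "\<tau> \<in> \<Delta> \<Longrightarrow> 0 \<in> \<tau>"
  using zero_in_lat_cone lat_cone_gens by metis

lemma nonneg_comb_in_cone:
  "\<tau> \<in> \<Delta> \<Longrightarrow> \<forall>v\<in>gens \<Delta> \<tau>. 0 \<le> c v \<Longrightarrow> (\<Sum>v\<in>gens \<Delta> \<tau>. c v *\<^sub>R emb v) \<in> \<tau>"
  using lat_cone_gens unfolding lat_cone_def by blast

lemma subcone_in_fan:
  assumes "\<tau> \<in> \<Delta>" "T \<subseteq> gens \<Delta> \<tau>"
  shows "lat_cone T \<in> \<Delta>" "gens \<Delta> (lat_cone T) = T"
proof -
  have "lat_cone T face_of \<tau>"
    using face_of_lat_cone[OF lat_independent_gens[OF assms(1)] assms(2)] lat_cone_gens[OF assms(1)]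
    by simp
  then show in_fan: "lat_cone T \<in> \<Delta>"
    using face_in_fan[OF assms(1)] zero_in_lat_cone by blast
  show "gens \<Delta> (lat_cone T) = T"
    using assms primitive_gens[OF assms(1)]
    by (intro gens_eqI[OF in_fan] lat_independent_subset[OF lat_independent_gens]) auto
qed

lemma zero_cone_in_fan: "{0} \<in> \<Delta>"
  and gens_zero_cone: "gens \<Delta> {0} = {}"
proof -
  obtain \<tau> where "\<tau> \<in> \<Delta>"
    using nonempty by blast
  from subcone_in_fan[OF this, of "{}"] show "{0} \<in> \<Delta>" "gens \<Delta> {0} = {}"
    by simp_all
qed

lemma finite_ray_gens: "finite (ray_gens \<Delta>)"
proof (rule finite_subset)
  show "ray_gens \<Delta> \<subseteq> (\<Union>\<tau>\<in>\<Delta>. gens \<Delta> \<tau>)"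
  proof
    fix v assume v: "v \<in> ray_gens \<Delta>"
    have "cone_gen {emb v} face_of cone_gen {emb v}"
      using convex_lat_cone cone_gen_emb_image[of "{v}"] face_of_refl by fastforce
    with v show "v \<in> (\<Union>\<tau>\<in>\<Delta>. gens \<Delta> \<tau>)"
      unfolding gens_def ray_gens_def by blast
  qed
  show "finite (\<Union>\<tau>\<in>\<Delta>. gens \<Delta> \<tau>)"
    using finite_fan finite_gens by blast
qed

lemma subset_iff_gens_subset:
  assumes "\<tau> \<in> \<Delta>" "\<rho> \<in> \<Delta>"
  shows "\<tau> \<subseteq> \<rho> \<longleftrightarrow> gens \<Delta> \<tau> \<subseteq> gens \<Delta> \<rho>"
proof
  assume "\<tau> \<subseteq> \<rho>"
  then have "\<tau> face_of \<rho>"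
    using inter_face_of[OF assms(2,1)] by (simp add: Int_absorb1 inf_commute)
  then show "gens \<Delta> \<tau> \<subseteq> gens \<Delta> \<rho>"
    unfolding gens_def using face_of_trans by blast
next
  assume "gens \<Delta> \<tau> \<subseteq> gens \<Delta> \<rho>"
  then show "\<tau> \<subseteq> \<rho>"
    using assms lat_cone_mono finite_gens lat_cone_gens by metis
qed

lemma pos_comb_in_cone_imp_subset:
  assumes \<rho>: "\<rho> \<in> \<Delta>" "\<rho>' \<in> \<Delta>" and c: "\<forall>v\<in>gens \<Delta> \<rho>. 0 < c v"
    and x: "(\<Sum>v\<in>gens \<Delta> \<rho>. c v *\<^sub>R emb v) \<in> \<rho>'"
  shows "\<rho> \<subseteq> \<rho>'"
proof -
  have F: "(\<rho> \<inter> \<rho>') face_of lat_cone (gens \<Delta> \<rho>)"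
    using inter_face_of[OF \<rho>] lat_cone_gens[OF \<rho>(1)] by simp
  have c0: "\<forall>v\<in>gens \<Delta> \<rho>. 0 \<le> c v"
    using c less_imp_le by blast
  with x have "(\<Sum>v\<in>gens \<Delta> \<rho>. c v *\<^sub>R emb v) \<in> \<rho> \<inter> \<rho>'"
    using nonneg_comb_in_cone[OF \<rho>(1)] by blast
  with c have "emb v \<in> \<rho> \<inter> \<rho>'" if "v \<in> gens \<Delta> \<rho>" for v
    using emb_in_face_of_lat_cone[OF finite_gens[OF \<rho>(1)] F c0 _ that] that by blast
  then have "lat_cone (gens \<Delta> \<rho>) \<subseteq> lat_cone (gens \<Delta> \<rho>')"
    using lat_cone_gens[OF \<rho>(2)] by (intro lat_cone_subsetI[OF finite_gens[OF \<rho>(1)]]) auto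
  then show ?thesis
    using lat_cone_gens \<rho> by metis
qed

lemma pos_comb_eq_imp_eq:
  assumes \<rho>: "\<rho> \<in> \<Delta>" "\<rho>' \<in> \<Delta>" and c: "\<forall>v\<in>gens \<Delta> \<rho>. 0 < c v" and c': "\<forall>v\<in>gens \<Delta> \<rho>'. 0 < c' v"
    and eq: "(\<Sum>v\<in>gens \<Delta> \<rho>. c v *\<^sub>R emb v) = (\<Sum>v\<in>gens \<Delta> \<rho>'. c' v *\<^sub>R emb v)"
  shows "\<rho> = \<rho>'"
proof -
  have "(\<Sum>v\<in>gens \<Delta> \<rho>'. c' v *\<^sub>R emb v) \<in> \<rho>'"
    using c' less_imp_le by (intro nonneg_comb_in_cone[OF \<rho>(2)]) blast
  then have "\<rho> \<subseteq> \<rho>'"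
    using pos_comb_in_cone_imp_subset[OF \<rho> c] eq by simp
  moreover have "(\<Sum>v\<in>gens \<Delta> \<rho>. c v *\<^sub>R emb v) \<in> \<rho>"
    using c less_imp_le by (intro nonneg_comb_in_cone[OF \<rho>(1)]) blast
  then have "\<rho>' \<subseteq> \<rho>"
    using pos_comb_in_cone_imp_subset[OF \<rho>(2,1) c'] eq by simp
  ultimately show ?thesis
    by blast
qed

lemma pos_comb_exists:
  assumes "x \<in> \<sigma>"
  obtains \<rho> c where "\<rho> \<in> \<Delta>" "\<forall>v\<in>gens \<Delta> \<rho>. 0 < c v" "x = (\<Sum>v\<in>gens \<Delta> \<rho>. c v *\<^sub>R emb v)"
proof -
  obtain \<tau> where \<tau>: "\<tau> \<in> \<Delta>" "x \<in> \<tau>"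
    using assms Union_fan by blast
  then obtain c where c: "\<forall>v\<in>gens \<Delta> \<tau>. 0 \<le> c v" "x = (\<Sum>v\<in>gens \<Delta> \<tau>. c v *\<^sub>R emb v)"
    using lat_cone_gens[OF \<tau>(1)] unfolding lat_cone_def by blast
  define T where "T = {v\<in>gens \<Delta> \<tau>. 0 < c v}"
  have T: "T \<subseteq> gens \<Delta> \<tau>"
    by (auto simp: T_def)
  have "x = (\<Sum>v\<in>T. c v *\<^sub>R emb v)"
    unfolding c(2) using c(1) finite_gens[OF \<tau>(1)] T
    by (intro sum.mono_neutral_right) (auto simp: T_def)
  moreover have "\<forall>v\<in>T. 0 < c v"
    by (simp add: T_def)
  ultimately show thesis
    using that[OF subcone_in_fan(1)[OF \<tau>(1) T]] unfolding subcone_in_fan(2)[OF \<tau>(1) T]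
    by blast
qed

lemma link_iff: "\<gamma> \<in> lk \<Delta> \<tau> \<longleftrightarrow> \<gamma> \<in> \<Delta> \<and> \<gamma> \<inter> \<tau> = {0} \<and> cone_join \<gamma> \<tau> \<in> \<Delta>"
  unfolding lk_def cone_join_def by blast

lemma gens_link_disjoint:
  assumes "\<tau> \<in> \<Delta>" "\<gamma> \<in> lk \<Delta> \<tau>"
  shows "gens \<Delta> \<gamma> \<inter> gens \<Delta> \<tau> = {}"
proof -
  have "emb v \<in> \<gamma> \<inter> \<tau>" if "v \<in> gens \<Delta> \<gamma>" "v \<in> gens \<Delta> \<tau>" for v
    using assms that emb_gens_in_cone link_iff by blast
  with assms show ?thesis
    using lat_independent_nonzero[OF lat_independent_gens[OF assms(1)]]
    by (fastforce simp: link_iff emb_eq_0_iff)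
qed

lemma gens_cone_join:
  assumes \<tau>: "\<tau> \<in> \<Delta>" and \<gamma>: "\<gamma> \<in> lk \<Delta> \<tau>"
  shows "gens \<Delta> (cone_join \<gamma> \<tau>) = gens \<Delta> \<gamma> \<union> gens \<Delta> \<tau>"
proof -
  let ?\<rho> = "cone_join \<gamma> \<tau>"
  have in_fan: "\<gamma> \<in> \<Delta>" "?\<rho> \<in> \<Delta>"
    using \<gamma> link_iff by auto
  have "\<gamma> \<subseteq> ?\<rho>" "\<tau> \<subseteq> ?\<rho>"
    unfolding cone_join_def using zero_in_cone in_fan \<tau> by force+
  then have sub: "gens \<Delta> \<gamma> \<union> gens \<Delta> \<tau> \<subseteq> gens \<Delta> ?\<rho>"
    using subset_iff_gens_subset in_fan \<tau> by blast
  have "?\<rho> = lat_cone (gens \<Delta> \<gamma> \<union> gens \<Delta> \<tau>)"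
    using lat_cone_Un[OF finite_gens finite_gens gens_link_disjoint[OF \<tau> \<gamma>]] in_fan \<tau>
    by (simp add: lat_cone_gens)
  with subcone_in_fan(2)[OF in_fan(2) sub] show ?thesis
    by simp
qed

lemma link_of_supercone:
  assumes \<tau>: "\<tau> \<in> \<Delta>" and \<rho>: "\<rho> \<in> \<Delta>" and sub: "gens \<Delta> \<tau> \<subseteq> gens \<Delta> \<rho>"
  defines "\<gamma> \<equiv> lat_cone (gens \<Delta> \<rho> - gens \<Delta> \<tau>)"
  shows "\<gamma> \<in> lk \<Delta> \<tau>" "cone_join \<gamma> \<tau> = \<rho>"
proof -
  have fin: "finite (gens \<Delta> \<rho>)"
    using \<rho> by (rule finite_gens)
  have "\<gamma> \<in> \<Delta>"
    unfolding \<gamma>_def using \<rho> by (rule subcone_in_fan) blast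
  moreover have "\<gamma> \<inter> \<tau> = {0}"
  proof -
    have "lat_independent ((gens \<Delta> \<rho> - gens \<Delta> \<tau>) \<union> gens \<Delta> \<tau>)"
      using lat_independent_gens[OF \<rho>] sub by (simp add: Un_absorb2)
    from lat_cone_disjoint[OF this] show ?thesis
      unfolding \<gamma>_def lat_cone_gens[OF \<tau>] by blast
  qed
  moreover show "cone_join \<gamma> \<tau> = \<rho>"
  proof -
    have "(gens \<Delta> \<rho> - gens \<Delta> \<tau>) \<inter> gens \<Delta> \<tau> = {}"
      by blast
    with lat_cone_Un[of "gens \<Delta> \<rho> - gens \<Delta> \<tau>" "gens \<Delta> \<tau>"] fin sub show ?thesis
      unfolding \<gamma>_def by (simp add: Un_absorb2 finite_subset lat_cone_gens[OF \<tau>] lat_cone_gens[OF \<rho>])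
  qed
  ultimately show "\<gamma> \<in> lk \<Delta> \<tau>"
    using \<rho> by (simp add: link_iff)
qed

lemma bij_betw_cone_join_link:
  assumes \<tau>: "\<tau> \<in> \<Delta>"
  shows "bij_betw (\<lambda>\<gamma>. cone_join \<gamma> \<tau>) (lk \<Delta> \<tau>) {\<rho>\<in>\<Delta>. gens \<Delta> \<tau> \<subseteq> gens \<Delta> \<rho>}"
proof (rule bij_betwI')
  fix \<gamma> \<gamma>' assume \<gamma>: "\<gamma> \<in> lk \<Delta> \<tau>" "\<gamma>' \<in> lk \<Delta> \<tau>"
  show "cone_join \<gamma> \<tau> = cone_join \<gamma>' \<tau> \<longleftrightarrow> \<gamma> = \<gamma>'"
  proof
    assume "cone_join \<gamma> \<tau> = cone_join \<gamma>' \<tau>"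
    then have "gens \<Delta> \<gamma> \<union> gens \<Delta> \<tau> = gens \<Delta> \<gamma>' \<union> gens \<Delta> \<tau>"
      using gens_cone_join[OF \<tau> \<gamma>(1)] gens_cone_join[OF \<tau> \<gamma>(2)] by simp
    then have "gens \<Delta> \<gamma> = gens \<Delta> \<gamma>'"
      using gens_link_disjoint[OF \<tau> \<gamma>(1)] gens_link_disjoint[OF \<tau> \<gamma>(2)] by blast
    with \<gamma> show "\<gamma> = \<gamma>'"
      using gens_inj link_iff by blast
  qed simp
next
  fix \<gamma> assume "\<gamma> \<in> lk \<Delta> \<tau>"
  then show "cone_join \<gamma> \<tau> \<in> {\<rho>\<in>\<Delta>. gens \<Delta> \<tau> \<subseteq> gens \<Delta> \<rho>}"
    using gens_cone_join[OF \<tau>] link_iff by auto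
next
  fix \<rho> assume "\<rho> \<in> {\<rho>\<in>\<Delta>. gens \<Delta> \<tau> \<subseteq> gens \<Delta> \<rho>}"
  then have "\<rho> \<in> \<Delta>" "gens \<Delta> \<tau> \<subseteq> gens \<Delta> \<rho>"
    by auto
  from link_of_supercone[OF \<tau> this] show "\<exists>\<gamma>\<in>lk \<Delta> \<tau>. \<rho> = cone_join \<gamma> \<tau>"
    by force
qed

lemma maximal_cone_exists:
  assumes "\<rho> \<in> \<Delta>"
  obtains \<delta> where "maximal_cone \<Delta> \<delta>" "\<rho> \<subseteq> \<delta>"
proof -
  obtain m where m: "m \<in> {\<delta>\<in>\<Delta>. \<rho> \<subseteq> \<delta>}" "\<forall>b\<in>{\<delta>\<in>\<Delta>. \<rho> \<subseteq> \<delta>}. m \<le> b \<longrightarrow> m = b"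
    using finite_has_maximal[of "{\<delta>\<in>\<Delta>. \<rho> \<subseteq> \<delta>}"] finite_fan assms by auto
  then have "maximal_cone \<Delta> m"
    unfolding maximal_cone_def by auto
  with m show thesis
    using that by blast
qed

lemma star_gens_eq_Union:
  assumes \<tau>: "\<tau> \<in> \<Delta>"
  shows "star_gens \<Delta> \<tau> = (\<Union>\<rho>\<in>{\<rho>\<in>\<Delta>. gens \<Delta> \<tau> \<subseteq> gens \<Delta> \<rho>}. gens \<Delta> \<rho>)"
proof (intro equalityI subsetI)
  fix v assume "v \<in> star_gens \<Delta> \<tau>"
  then obtain \<delta> where "maximal_cone \<Delta> \<delta>" "\<tau> \<subseteq> \<delta>" "v \<in> gens \<Delta> \<delta>"
    unfolding star_gens_def by blast
  with \<tau> show "v \<in> (\<Union>\<rho>\<in>{\<rho>\<in>\<Delta>. gens \<Delta> \<tau> \<subseteq> gens \<Delta> \<rho>}. gens \<Delta> \<rho>)"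
    using subset_iff_gens_subset by (auto simp: maximal_cone_def)
next
  fix v assume "v \<in> (\<Union>\<rho>\<in>{\<rho>\<in>\<Delta>. gens \<Delta> \<tau> \<subseteq> gens \<Delta> \<rho>}. gens \<Delta> \<rho>)"
  then obtain \<rho> where \<rho>: "\<rho> \<in> \<Delta>" "gens \<Delta> \<tau> \<subseteq> gens \<Delta> \<rho>" "v \<in> gens \<Delta> \<rho>"
    by blast
  obtain \<delta> where \<delta>: "maximal_cone \<Delta> \<delta>" "\<rho> \<subseteq> \<delta>"
    using maximal_cone_exists[OF \<rho>(1)] by blast
  then have "\<delta> \<in> \<Delta>"
    by (simp add: maximal_cone_def)
  with \<tau> \<rho> \<delta> show "v \<in> star_gens \<Delta> \<tau>"
    unfolding star_gens_def using subset_iff_gens_subset by blast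
qed

lemma zero_cone_in_link: "\<tau> \<in> \<Delta> \<Longrightarrow> {0} \<in> lk \<Delta> \<tau>"
  using zero_cone_in_fan zero_in_cone by (auto simp: link_iff cone_join_def)

lemma star_gens_eq:
  assumes \<tau>: "\<tau> \<in> \<Delta>"
  shows "star_gens \<Delta> \<tau> = gens \<Delta> \<tau> \<union> lk_gens \<Delta> \<tau>"
proof -
  have "{\<rho>\<in>\<Delta>. gens \<Delta> \<tau> \<subseteq> gens \<Delta> \<rho>} = (\<lambda>\<gamma>. cone_join \<gamma> \<tau>) ` lk \<Delta> \<tau>"
    using bij_betw_cone_join_link[OF \<tau>] by (simp add: bij_betw_def)
  then have "star_gens \<Delta> \<tau> = (\<Union>\<gamma>\<in>lk \<Delta> \<tau>. gens \<Delta> \<gamma> \<union> gens \<Delta> \<tau>)"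
    using gens_cone_join[OF \<tau>] by (simp add: star_gens_eq_Union[OF \<tau>])
  also have "\<dots> = gens \<Delta> \<tau> \<union> lk_gens \<Delta> \<tau>"
    using zero_cone_in_link[OF \<tau>] by (auto simp: lk_gens_def)
  finally show ?thesis .
qed

lemma box_pts_zero_cone: "box_pts \<Delta> {0} = {0}"
  unfolding box_pts_def using gens_zero_cone by (auto simp: emb_eq_0_iff)

lemma finite_box_pts:
  assumes \<tau>: "\<tau> \<in> \<Delta>"
  shows "finite (box_pts \<Delta> \<tau>)"
proof (rule finite_subset)
  define K where "K i = (\<Sum>v\<in>gens \<Delta> \<tau>. \<bar>v $ i\<bar>)" for i
  show "box_pts \<Delta> \<tau> \<subseteq> {u. \<forall>i. \<bar>u $ i\<bar> \<le> K i}"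
  proof safe
    fix u i assume "u \<in> box_pts \<Delta> \<tau>"
    then obtain a where a: "\<forall>v\<in>gens \<Delta> \<tau>. 0 < a v \<and> a v < 1" "emb u = (\<Sum>v\<in>gens \<Delta> \<tau>. a v *\<^sub>R emb v)"
      unfolding box_pts_def by blast
    have "\<bar>real_of_int (u $ i)\<bar> = \<bar>\<Sum>v\<in>gens \<Delta> \<tau>. a v * real_of_int (v $ i)\<bar>"
      using arg_cong[OF a(2), of "\<lambda>x. x $ i"] by (simp add: emb_def)
    also have "\<dots> \<le> (\<Sum>v\<in>gens \<Delta> \<tau>. \<bar>a v * real_of_int (v $ i)\<bar>)"
      by (rule sum_abs)
    also have "\<dots> \<le> (\<Sum>v\<in>gens \<Delta> \<tau>. \<bar>real_of_int (v $ i)\<bar>)"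
    proof (rule sum_mono)
      fix v assume "v \<in> gens \<Delta> \<tau>"
      with a(1) have "0 \<le> a v" "a v \<le> 1"
        by auto
      then show "\<bar>a v * real_of_int (v $ i)\<bar> \<le> \<bar>real_of_int (v $ i)\<bar>"
        by (simp add: abs_mult mult_left_le_one_le)
    qed
    finally show "\<bar>u $ i\<bar> \<le> K i"
      by (simp add: K_def flip: of_int_abs of_int_sum)
  qed
qed (rule finite_bounded_int_vecs)

lemma gens_unimodular:
  assumes \<tau>: "\<tau> \<in> \<Delta>" and S: "S \<subseteq> Z" "zbasis Z" "\<tau> = cone_gen (emb ` S)"
  shows "gens \<Delta> \<tau> = S"
proof (rule gens_eqI[OF \<tau>])
  show "lat_independent S"
    using lat_independent_zbasis[OF S(2)] S(1) by (rule lat_independent_subset)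
  show "\<forall>p\<in>S. primitive p"
    using zbasis_primitive[OF S(2)] S(1) by blast
  show "\<tau> = lat_cone S"
    using S(3) by (simp add: cone_gen_emb_image)
qed

text \<open>The coordinates of a box point in a \<open>\<int>\<close>-basis are integers strictly between \<open>0\<close> and \<open>1\<close>.\<close>
lemma box_pts_unimodular:
  assumes \<tau>: "\<tau> \<in> \<Delta>" and "unimodular \<tau>" and "\<tau> \<noteq> {0}"
  shows "box_pts \<Delta> \<tau> = {}"
proof (rule equals0I)
  obtain S Z where S: "S \<subseteq> Z" "zbasis Z" "\<tau> = cone_gen (emb ` S)"
    using assms(2) unfolding unimodular_def by blast
  have Z: "lat_independent Z"
    using S(2) by (rule lat_independent_zbasis)
  have "S \<noteq> {}"
    using assms(3) S(3) by (auto simp: cone_gen_emb_image)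
  then obtain s where s: "s \<in> S"
    by blast
  fix u assume "u \<in> box_pts \<Delta> \<tau>"
  then obtain a where a: "\<forall>v\<in>S. 0 < a v \<and> a v < 1" "emb u = (\<Sum>v\<in>S. a v *\<^sub>R emb v)"
    unfolding box_pts_def gens_unimodular[OF \<tau> S] by blast
  obtain c where "u = (\<Sum>z\<in>Z. c z *s z)"
    using S(2) unfolding zbasis_def by blast
  then have "(\<Sum>z\<in>Z. real_of_int (c z) *\<^sub>R emb z) = (\<Sum>z\<in>Z. (if z \<in> S then a z else 0) *\<^sub>R emb z)"
    using a(2) lat_independent_finite[OF Z] S(1) by (simp add: emb_sum emb_smult sum_scaleR_if_subset)
  from lat_independent_coeff_eq[OF Z this, of s] s S(1) have "real_of_int (c s) = a s"
    by auto
  with a(1) s have "0 < c s" "c s < 1"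
    by auto
  then show False
    by linarith
qed

lemma zero_cone_notin_sing: "{0} \<notin> sing \<Delta>"
  unfolding sing_def using unimodular_zero_cone by blast

section \<open>Decomposition of lattice points\<close>

definition decomposition :: "int ^ 'n \<Rightarrow> (real ^ 'n) set \<Rightarrow> (real ^ 'n) set \<Rightarrow> int ^ 'n \<Rightarrow> bool" where
  "decomposition w \<tau> \<rho> u \<longleftrightarrow> \<tau> \<in> \<Delta> \<and> \<rho> \<in> \<Delta> \<and> gens \<Delta> \<tau> \<subseteq> gens \<Delta> \<rho> \<and> u \<in> box_pts \<Delta> \<tau> \<and>
     w - u - (\<Sum>v\<in>gens \<Delta> \<rho> - gens \<Delta> \<tau>. v) \<in> nat_span (gens \<Delta> \<rho>)"

lemma decomposition_imp_pos_comb: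
  assumes "decomposition w \<tau> \<rho> u"
  obtains c where "\<forall>v\<in>gens \<Delta> \<rho>. 0 < c v" "emb w = (\<Sum>v\<in>gens \<Delta> \<rho>. c v *\<^sub>R emb v)"
    "gens \<Delta> \<tau> = {v\<in>gens \<Delta> \<rho>. real_of_int \<lfloor>c v\<rfloor> \<noteq> c v}" "u = w - (\<Sum>v\<in>gens \<Delta> \<rho>. \<lfloor>c v\<rfloor> *s v)"
proof -
  let ?D = "gens \<Delta> \<rho> - gens \<Delta> \<tau>"
  have \<rho>: "\<rho> \<in> \<Delta>" and sub: "gens \<Delta> \<tau> \<subseteq> gens \<Delta> \<rho>"
    using assms by (simp_all add: decomposition_def)
  have fin: "finite (gens \<Delta> \<rho>)"
    using \<rho> by (rule finite_gens)
  have split: "(\<Sum>v\<in>gens \<Delta> \<rho>. f v) = (\<Sum>v\<in>?D. f v) + (\<Sum>v\<in>gens \<Delta> \<tau>. f v)"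
    for f :: "_ \<Rightarrow> 'z::comm_monoid_add"
    by (rule sum.subset_diff[OF sub fin])
  obtain a where a: "\<forall>v\<in>gens \<Delta> \<tau>. 0 < a v \<and> a v < 1" "emb u = (\<Sum>v\<in>gens \<Delta> \<tau>. a v *\<^sub>R emb v)"
    using assms unfolding decomposition_def box_pts_def by blast
  obtain n where n: "w = u + (\<Sum>v\<in>?D. v) + (\<Sum>v\<in>gens \<Delta> \<rho>. int (n v) *s v)"
    using assms unfolding decomposition_def nat_span_def by (auto simp: algebra_simps)
  define c where "c v = (if v \<in> gens \<Delta> \<tau> then a v else 1) + real (n v)" for v
  have floor_c: "\<lfloor>c v\<rfloor> = int (n v) + (if v \<in> gens \<Delta> \<tau> then 0 else 1)" for v
    using a(1) by (auto simp: c_def floor_eq_iff)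
  show thesis
  proof
    show "\<forall>v\<in>gens \<Delta> \<rho>. 0 < c v"
      using a(1) by (auto simp: c_def add_pos_nonneg)
    have "(\<Sum>v\<in>gens \<Delta> \<rho>. c v *\<^sub>R emb v) =
        (\<Sum>v\<in>?D. emb v) + (\<Sum>v\<in>gens \<Delta> \<tau>. a v *\<^sub>R emb v) + (\<Sum>v\<in>gens \<Delta> \<rho>. real (n v) *\<^sub>R emb v)"
      unfolding c_def scaleR_add_left sum.distrib split[of "\<lambda>v. (if v \<in> gens \<Delta> \<tau> then a v else 1) *\<^sub>R emb v"]
      by (auto intro!: sum.cong)
    also have "\<dots> = emb w"
      unfolding n a(2)[symmetric] by (simp add: emb_add emb_sum emb_smult)
    finally show "emb w = (\<Sum>v\<in>gens \<Delta> \<rho>. c v *\<^sub>R emb v)" ..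
    show "gens \<Delta> \<tau> = {v\<in>gens \<Delta> \<rho>. real_of_int \<lfloor>c v\<rfloor> \<noteq> c v}"
      using sub a(1) by (auto simp: floor_c c_def)
    have "(\<Sum>v\<in>gens \<Delta> \<rho>. \<lfloor>c v\<rfloor> *s v) = (\<Sum>v\<in>gens \<Delta> \<rho>. int (n v) *s v) + (\<Sum>v\<in>?D. v)"
      unfolding floor_c vector_sadd_rdistrib sum.distrib split[of "\<lambda>v. (if v \<in> gens \<Delta> \<tau> then 0 else 1) *s v"]
      by (auto intro!: sum.cong)
    then show "u = w - (\<Sum>v\<in>gens \<Delta> \<rho>. \<lfloor>c v\<rfloor> *s v)"
      unfolding n by (simp add: algebra_simps)
  qed
qed

lemma decomposition_unique:
  assumes "decomposition w \<tau> \<rho> u" "decomposition w \<tau>' \<rho>' u'"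
  shows "\<tau> = \<tau>'" "\<rho> = \<rho>'" "u = u'"
proof -
  obtain c where c: "\<forall>v\<in>gens \<Delta> \<rho>. 0 < c v" "emb w = (\<Sum>v\<in>gens \<Delta> \<rho>. c v *\<^sub>R emb v)"
    "gens \<Delta> \<tau> = {v\<in>gens \<Delta> \<rho>. real_of_int \<lfloor>c v\<rfloor> \<noteq> c v}" "u = w - (\<Sum>v\<in>gens \<Delta> \<rho>. \<lfloor>c v\<rfloor> *s v)"
    using decomposition_imp_pos_comb[OF assms(1)] by blast
  obtain c' where c': "\<forall>v\<in>gens \<Delta> \<rho>'. 0 < c' v" "emb w = (\<Sum>v\<in>gens \<Delta> \<rho>'. c' v *\<^sub>R emb v)"
    "gens \<Delta> \<tau>' = {v\<in>gens \<Delta> \<rho>'. real_of_int \<lfloor>c' v\<rfloor> \<noteq> c' v}" "u' = w - (\<Sum>v\<in>gens \<Delta> \<rho>'. \<lfloor>c' v\<rfloor> *s v)"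
    using decomposition_imp_pos_comb[OF assms(2)] by blast
  have in_fan: "\<tau> \<in> \<Delta>" "\<rho> \<in> \<Delta>" "\<tau>' \<in> \<Delta>" "\<rho>' \<in> \<Delta>"
    using assms by (simp_all add: decomposition_def)
  show \<rho>: "\<rho> = \<rho>'"
    using pos_comb_eq_imp_eq[OF in_fan(2,4) c(1) c'(1)] c(2) c'(2) by simp
  have "c v = c' v" if "v \<in> gens \<Delta> \<rho>" for v
    using lat_independent_coeff_eq[OF lat_independent_gens[OF in_fan(2)] _ that] c(2) c'(2) \<rho> by simp
  then have "gens \<Delta> \<tau> = gens \<Delta> \<tau>'" and "u = u'"
    using c(3,4) c'(3,4) \<rho> by (auto cong: sum.cong)
  then show "\<tau> = \<tau>'" "u = u'"
    using gens_inj[OF in_fan(1,3)] by simp_all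
qed

lemma decomposition_imp_in_support:
  assumes "decomposition w \<tau> \<rho> u"
  shows "emb w \<in> \<sigma>"
proof -
  obtain c where c: "\<forall>v\<in>gens \<Delta> \<rho>. 0 < c v" "emb w = (\<Sum>v\<in>gens \<Delta> \<rho>. c v *\<^sub>R emb v)"
    using decomposition_imp_pos_comb[OF assms] by blast
  have "\<rho> \<in> \<Delta>"
    using assms by (simp add: decomposition_def)
  moreover from this c have "emb w \<in> \<rho>"
    using less_imp_le by (auto intro!: nonneg_comb_in_cone)
  ultimately show ?thesis
    using Union_fan by blast
qed

lemma decomposition_exists:
  assumes "emb w \<in> \<sigma>"
  obtains \<tau> \<rho> u where "decomposition w \<tau> \<rho> u"
proof -
  obtain \<rho> c where \<rho>: "\<rho> \<in> \<Delta>" and c: "\<forall>v\<in>gens \<Delta> \<rho>. 0 < c v" "emb w = (\<Sum>v\<in>gens \<Delta> \<rho>. c v *\<^sub>R emb v)"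
    using pos_comb_exists[OF assms] by blast
  have fin: "finite (gens \<Delta> \<rho>)"
    using \<rho> by (rule finite_gens)
  define T where "T = {v\<in>gens \<Delta> \<rho>. real_of_int \<lfloor>c v\<rfloor> \<noteq> c v}"
  have T: "T \<subseteq> gens \<Delta> \<rho>"
    by (auto simp: T_def)
  define \<tau> where "\<tau> = lat_cone T"
  have \<tau>: "\<tau> \<in> \<Delta>" "gens \<Delta> \<tau> = T"
    unfolding \<tau>_def using subcone_in_fan[OF \<rho> T] by simp_all
  define u where "u = w - (\<Sum>v\<in>gens \<Delta> \<rho>. \<lfloor>c v\<rfloor> *s v)"
  have "u \<in> box_pts \<Delta> \<tau>"
    unfolding box_pts_def \<tau>(2)
  proof (intro CollectI exI conjI ballI)
    fix v assume "v \<in> T"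
    then have "real_of_int \<lfloor>c v\<rfloor> \<noteq> c v"
      by (simp add: T_def)
    then show "0 < c v - real_of_int \<lfloor>c v\<rfloor>" "c v - real_of_int \<lfloor>c v\<rfloor> < 1"
      using floor_correct[of "c v"] by linarith+
  next
    have "emb u = (\<Sum>v\<in>gens \<Delta> \<rho>. (c v - real_of_int \<lfloor>c v\<rfloor>) *\<^sub>R emb v)"
      by (simp add: u_def emb_diff emb_sum emb_smult c(2) scaleR_diff_left sum_subtractf)
    also have "\<dots> = (\<Sum>v\<in>T. (c v - real_of_int \<lfloor>c v\<rfloor>) *\<^sub>R emb v)"
      using fin T by (intro sum.mono_neutral_right) (auto simp: T_def)
    finally show "emb u = (\<Sum>v\<in>T. (c v - real_of_int \<lfloor>c v\<rfloor>) *\<^sub>R emb v)" .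
  qed
  moreover have "w - u - (\<Sum>v\<in>gens \<Delta> \<rho> - T. v) \<in> nat_span (gens \<Delta> \<rho>)"
  proof -
    have "gens \<Delta> \<rho> - T = {v\<in>gens \<Delta> \<rho>. real_of_int \<lfloor>c v\<rfloor> = c v}"
      by (auto simp: T_def)
    with sum_floor_minus_in_nat_span[OF fin c(1)] show ?thesis
      unfolding u_def by simp
  qed
  ultimately show thesis
    using that[of \<tau> \<rho> u] \<tau> \<rho> T by (simp add: decomposition_def)
qed

lemma G_eq_sum_decompositions:
  "G \<sigma> w = (\<Sum>\<tau>\<in>\<Delta>. \<Sum>\<rho>\<in>{\<rho>\<in>\<Delta>. gens \<Delta> \<tau> \<subseteq> gens \<Delta> \<rho>}. \<Sum>u\<in>box_pts \<Delta> \<tau>.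
              of_bool (w - u - (\<Sum>v\<in>gens \<Delta> \<rho> - gens \<Delta> \<tau>. v) \<in> nat_span (gens \<Delta> \<rho>)))"
proof -
  let ?S = "SIGMA \<tau>:\<Delta>. SIGMA \<rho>:{\<rho>\<in>\<Delta>. gens \<Delta> \<tau> \<subseteq> gens \<Delta> \<rho>}. box_pts \<Delta> \<tau>"
  define D where "D x \<longleftrightarrow> decomposition w (fst x) (fst (snd x)) (snd (snd x))" for x
  have "(\<exists>x\<in>?S. D x) \<longleftrightarrow> emb w \<in> \<sigma>"
  proof
    assume "\<exists>x\<in>?S. D x"
    then show "emb w \<in> \<sigma>"
      using decomposition_imp_in_support by (auto simp: D_def)
  next
    assume "emb w \<in> \<sigma>"
    then obtain \<tau> \<rho> u where "decomposition w \<tau> \<rho> u"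
      by (rule decomposition_exists)
    then show "\<exists>x\<in>?S. D x"
      by (intro bexI[of _ "(\<tau>, \<rho>, u)"]) (auto simp: D_def decomposition_def)
  qed
  then have "G \<sigma> w = of_bool (\<exists>x\<in>?S. D x)"
    by (simp add: G_def)
  also have "\<dots> = (\<Sum>x\<in>?S. of_bool (D x))"
    using finite_fan finite_box_pts
    by (intro sum_of_bool_unique[symmetric]) (auto simp: D_def prod_eq_iff dest: decomposition_unique)
  also have "\<dots> = (\<Sum>\<tau>\<in>\<Delta>. \<Sum>p\<in>{\<rho>\<in>\<Delta>. gens \<Delta> \<tau> \<subseteq> gens \<Delta> \<rho>} \<times> box_pts \<Delta> \<tau>. of_bool (D (\<tau>, p)))"
    using finite_fan finite_box_pts by (intro sum_Sigma_eq_sum_sum) auto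
  also have "\<dots> = (\<Sum>\<tau>\<in>\<Delta>. \<Sum>\<rho>\<in>{\<rho>\<in>\<Delta>. gens \<Delta> \<tau> \<subseteq> gens \<Delta> \<rho>}. \<Sum>u\<in>box_pts \<Delta> \<tau>. of_bool (D (\<tau>, \<rho>, u)))"
    using finite_fan finite_box_pts by (intro sum.cong refl sum_Sigma_eq_sum_sum) auto
  also have "\<dots> = (\<Sum>\<tau>\<in>\<Delta>. \<Sum>\<rho>\<in>{\<rho>\<in>\<Delta>. gens \<Delta> \<tau> \<subseteq> gens \<Delta> \<rho>}. \<Sum>u\<in>box_pts \<Delta> \<tau>.
              of_bool (w - u - (\<Sum>v\<in>gens \<Delta> \<rho> - gens \<Delta> \<tau>. v) \<in> nat_span (gens \<Delta> \<rho>)))"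
    by (intro sum.cong refl) (simp add: D_def decomposition_def)
  finally show ?thesis .
qed

definition supercone_term :: "(real ^ 'n) set \<Rightarrow> (real ^ 'n) set \<Rightarrow> 'n lpoly" where
  "supercone_term \<tau> \<rho> = (\<Prod>v\<in>gens \<Delta> \<rho> - gens \<Delta> \<tau>. xmon v) * (\<Prod>v\<in>ray_gens \<Delta> - gens \<Delta> \<rho>. 1 - xmon v)"

lemma mul_series_shifted_nat_span:
  assumes \<rho>: "\<rho> \<in> \<Delta>"
  shows "mul_series (\<Prod>v\<in>ray_gens \<Delta>. 1 - xmon v)
           (\<lambda>y. of_bool (y - u - (\<Sum>v\<in>gens \<Delta> \<rho> - gens \<Delta> \<tau>. v) \<in> nat_span (gens \<Delta> \<rho>))) w =
         Poly_Mapping.lookup (xmon u * supercone_term \<tau> \<rho>) w"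
proof -
  let ?s = "\<Sum>v\<in>gens \<Delta> \<rho> - gens \<Delta> \<tau>. v"
  let ?Q = "\<Prod>v\<in>ray_gens \<Delta> - gens \<Delta> \<rho>. 1 - xmon v"
  have "(\<Prod>v\<in>ray_gens \<Delta>. 1 - xmon v) = ?Q * (\<Prod>v\<in>gens \<Delta> \<rho>. 1 - xmon v)"
    by (rule prod.subset_diff[OF gens_subset_ray_gens finite_ray_gens])
  then have Q: "mul_series (\<Prod>v\<in>ray_gens \<Delta>. 1 - xmon v) (\<lambda>y. of_bool (y \<in> nat_span (gens \<Delta> \<rho>))) =
                Poly_Mapping.lookup ?Q"
    by (simp add: mul_series_times mul_series_nat_span[OF lat_independent_gens[OF \<rho>]] mul_series_lookup)
  have "xmon (u + ?s) = xmon u * (\<Prod>v\<in>gens \<Delta> \<rho> - gens \<Delta> \<tau>. xmon v)"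
    using finite_gens[OF \<rho>] by (simp add: xmon_add xmon_sum)
  then show ?thesis
    using mul_series_shift[of _ "\<lambda>y. of_bool (y \<in> nat_span (gens \<Delta> \<rho>))" "u + ?s" w]
    by (simp add: Q diff_diff_eq supercone_term_def mult.assoc flip: lookup_xmon_times)
qed

lemma mul_series_G:
  "mul_series (\<Prod>v\<in>ray_gens \<Delta>. 1 - xmon v) (G \<sigma>) =
   Poly_Mapping.lookup (\<Sum>\<tau>\<in>\<Delta>. B \<Delta> \<tau> * (\<Sum>\<rho>\<in>{\<rho>\<in>\<Delta>. gens \<Delta> \<tau> \<subseteq> gens \<Delta> \<rho>}. supercone_term \<tau> \<rho>))"
proof
  fix w
  let ?P = "\<Prod>v\<in>ray_gens \<Delta>. 1 - xmon v"
  let ?R = "\<lambda>\<tau>. {\<rho>\<in>\<Delta>. gens \<Delta> \<tau> \<subseteq> gens \<Delta> \<rho>}"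
  define f where "f \<tau> \<rho> u = (\<lambda>y. of_bool (y - u - (\<Sum>v\<in>gens \<Delta> \<rho> - gens \<Delta> \<tau>. v) \<in> nat_span (gens \<Delta> \<rho>)) :: int)"
    for \<tau> \<rho> u
  have G: "G \<sigma> = (\<lambda>y. \<Sum>\<tau>\<in>\<Delta>. \<Sum>\<rho>\<in>?R \<tau>. \<Sum>u\<in>box_pts \<Delta> \<tau>. f \<tau> \<rho> u y)"
    unfolding f_def by (rule ext) (simp only: G_eq_sum_decompositions)
  have "mul_series ?P (\<lambda>y. \<Sum>\<rho>\<in>?R \<tau>. \<Sum>u\<in>box_pts \<Delta> \<tau>. f \<tau> \<rho> u y) w =
        Poly_Mapping.lookup (B \<Delta> \<tau> * (\<Sum>\<rho>\<in>?R \<tau>. supercone_term \<tau> \<rho>)) w" if \<tau>: "\<tau> \<in> \<Delta>" for \<tau>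
  proof -
    have "mul_series ?P (\<lambda>y. \<Sum>u\<in>box_pts \<Delta> \<tau>. f \<tau> \<rho> u y) w =
          Poly_Mapping.lookup (B \<Delta> \<tau> * supercone_term \<tau> \<rho>) w" if "\<rho> \<in> ?R \<tau>" for \<rho>
      using that
      by (simp add: mul_series_sum_right[OF finite_box_pts[OF \<tau>]] f_def mul_series_shifted_nat_span
          B_def lookup_sum sum_distrib_right)
    then show ?thesis
      using finite_fan by (simp add: mul_series_sum_right lookup_sum sum_distrib_left)
  qed
  then show "mul_series ?P (G \<sigma>) w =
      Poly_Mapping.lookup (\<Sum>\<tau>\<in>\<Delta>. B \<Delta> \<tau> * (\<Sum>\<rho>\<in>?R \<tau>. supercone_term \<tau> \<rho>)) w"
    unfolding G using finite_fan by (simp add: mul_series_sum_right lookup_sum)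
qed

lemma sum_supercone_terms:
  assumes \<tau>: "\<tau> \<in> \<Delta>"
  shows "(\<Sum>\<rho>\<in>{\<rho>\<in>\<Delta>. gens \<Delta> \<tau> \<subseteq> gens \<Delta> \<rho>}. supercone_term \<tau> \<rho>) =
         H_lk \<Delta> \<tau> * (\<Prod>v\<in>ray_gens \<Delta> - star_gens \<Delta> \<tau>. 1 - xmon v)"
proof -
  let ?L = "lk_gens \<Delta> \<tau>"
  have L: "?L \<subseteq> ray_gens \<Delta>"
    unfolding lk_gens_def using gens_subset_ray_gens by blast
  have join_term: "supercone_term \<tau> (cone_join \<gamma> \<tau>) =
      (\<Prod>v\<in>gens \<Delta> \<gamma>. xmon v) * ((\<Prod>v\<in>?L - gens \<Delta> \<gamma>. 1 - xmon v) *
        (\<Prod>v\<in>ray_gens \<Delta> - star_gens \<Delta> \<tau>. 1 - xmon v))" if \<gamma>: "\<gamma> \<in> lk \<Delta> \<tau>" for \<gamma>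
  proof -
    have "gens \<Delta> \<gamma> \<subseteq> ?L"
      using \<gamma> unfolding lk_gens_def by blast
    then have parts: "ray_gens \<Delta> - gens \<Delta> (cone_join \<gamma> \<tau>) =
        (?L - gens \<Delta> \<gamma>) \<union> (ray_gens \<Delta> - star_gens \<Delta> \<tau>)"
      using L gens_link_disjoint[OF \<tau>] by (auto simp: gens_cone_join[OF \<tau> \<gamma>] star_gens_eq[OF \<tau>] lk_gens_def)
    have "(\<Prod>v\<in>ray_gens \<Delta> - gens \<Delta> (cone_join \<gamma> \<tau>). 1 - xmon v) =
        (\<Prod>v\<in>?L - gens \<Delta> \<gamma>. 1 - xmon v) * (\<Prod>v\<in>ray_gens \<Delta> - star_gens \<Delta> \<tau>. 1 - xmon v)"
      unfolding parts using L finite_ray_gens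
      by (intro prod.union_disjoint) (auto intro: finite_subset simp: star_gens_eq[OF \<tau>])
    moreover have "gens \<Delta> (cone_join \<gamma> \<tau>) - gens \<Delta> \<tau> = gens \<Delta> \<gamma>"
      using gens_cone_join[OF \<tau> \<gamma>] gens_link_disjoint[OF \<tau> \<gamma>] by blast
    ultimately show ?thesis
      by (simp add: supercone_term_def)
  qed
  have "(\<Sum>\<rho>\<in>{\<rho>\<in>\<Delta>. gens \<Delta> \<tau> \<subseteq> gens \<Delta> \<rho>}. supercone_term \<tau> \<rho>) =
        (\<Sum>\<gamma>\<in>lk \<Delta> \<tau>. supercone_term \<tau> (cone_join \<gamma> \<tau>))"
    by (rule sum.reindex_bij_betw[OF bij_betw_cone_join_link[OF \<tau>], symmetric])
  also have "\<dots> = H_lk \<Delta> \<tau> * (\<Prod>v\<in>ray_gens \<Delta> - star_gens \<Delta> \<tau>. 1 - xmon v)"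
    unfolding H_lk_def by (simp add: join_term sum_distrib_right mult.assoc)
  finally show ?thesis .
qed

lemma B_zero_cone: "B \<Delta> {0} = 1"
  by (simp add: B_def box_pts_zero_cone xmon_0)

lemma sum_supercone_terms_zero_cone:
  "(\<Sum>\<rho>\<in>{\<rho>\<in>\<Delta>. gens \<Delta> {0} \<subseteq> gens \<Delta> \<rho>}. supercone_term {0} \<rho>) = H \<Delta>"
  by (simp add: H_def supercone_term_def gens_zero_cone)

lemma B_unimodular: "\<tau> \<in> \<Delta> \<Longrightarrow> \<tau> \<notin> sing \<Delta> \<Longrightarrow> \<tau> \<noteq> {0} \<Longrightarrow> B \<Delta> \<tau> = 0"
  by (simp add: B_def sing_def box_pts_unimodular)

lemma sum_cone_contributions:
  "(\<Sum>\<tau>\<in>\<Delta>. B \<Delta> \<tau> * (\<Sum>\<rho>\<in>{\<rho>\<in>\<Delta>. gens \<Delta> \<tau> \<subseteq> gens \<Delta> \<rho>}. supercone_term \<tau> \<rho>)) =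
   H \<Delta> + (\<Sum>\<tau>\<in>sing \<Delta>. B \<Delta> \<tau> * H_lk \<Delta> \<tau> * (\<Prod>v\<in>ray_gens \<Delta> - star_gens \<Delta> \<tau>. 1 - xmon v))"
  (is "(\<Sum>\<tau>\<in>\<Delta>. ?F \<tau>) = _")
proof -
  have sing: "sing \<Delta> \<subseteq> \<Delta> - {{0}}"
    using zero_cone_notin_sing by (auto simp: sing_def)
  have "(\<Sum>\<tau>\<in>\<Delta>. ?F \<tau>) = ?F {0} + (\<Sum>\<tau>\<in>\<Delta> - {{0}}. ?F \<tau>)"
    using finite_fan zero_cone_in_fan by (simp add: sum.remove)
  also have "(\<Sum>\<tau>\<in>\<Delta> - {{0}}. ?F \<tau>) = (\<Sum>\<tau>\<in>sing \<Delta>. ?F \<tau>)"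
    using finite_fan sing by (intro sum.mono_neutral_right) (auto simp: B_unimodular)
  finally show ?thesis
    using sing by (simp add: B_zero_cone sum_supercone_terms_zero_cone sum_supercone_terms
        sing_def mult.assoc)
qed

theorem mul_series_G_eq:
  "mul_series (\<Prod>v\<in>ray_gens \<Delta>. 1 - xmon v) (G \<sigma>) =
   Poly_Mapping.lookup (H \<Delta> + (\<Sum>\<tau>\<in>sing \<Delta>. B \<Delta> \<tau> * H_lk \<Delta> \<tau> *
                          (\<Prod>v\<in>ray_gens \<Delta> - star_gens \<Delta> \<tau>. 1 - xmon v)))"
  by (simp only: mul_series_G sum_cone_contributions)

end

theorem theorem1p1:
  fixes \<sigma> :: "(real ^ 'n) set" and \<Delta> :: "(real ^ 'n) set set"
  assumes "rational_polyhedral_cone \<sigma>"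
    and "strongly_convex \<sigma>"
    and "rational_simplicial_subdivision \<Delta> \<sigma>"
  shows "mul_series (\<Prod>v\<in>ray_gens \<Delta>. 1 - xmon v) (G \<sigma>) =
         Poly_Mapping.lookup (H \<Delta> + (\<Sum>\<tau>\<in>sing \<Delta>. B \<Delta> \<tau> * H_lk \<Delta> \<tau> *
                          (\<Prod>v\<in>ray_gens \<Delta> - star_gens \<Delta> \<tau>. 1 - xmon v)))"
proof -
  obtain S where "\<sigma> = cone_gen S"
    using assms(1) unfolding rational_polyhedral_cone_def by blast
  then have "0 \<in> \<sigma>"
    unfolding cone_gen_def by (auto intro!: exI[of _ "\<lambda>_. 0"])
  with assms(3) have "\<Delta> \<noteq> {}"
    unfolding rational_simplicial_subdivision_def by auto
  with assms(3) interpret simplicial_fan \<Delta> \<sigma>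
    by unfold_locales
  show ?thesis
    by (rule mul_series_G_eq)
qed

end
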